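(* Let $\kappa: G\to[1,\infty)$. (1) $G$ has the $\mathcal{L}^2_\kappa$-decay property with respect to $\|\cdot\|_{2,\kappa}$ if and only if the linear map $f\mapsto\pi_\lambda(f)$ from $(\mathcal{K}(G),\|\cdot\|_{2,\kappa})$ to $(C^*_r(G),\|\cdot\|)$ is bounded. (2) If $G$ is $\kappa$-decaying, then $(G,\sigma)$ is $\kappa$-decaying for every normalized 2-cocycle $\sigma$, and $$\{x\in vN(G,\sigma)\mid \widehat x\in\mathcal{L}^2_\kappa\}=\tilde\pi_\sigma(\mathcal{L}^2_\kappa)\subseteq CF(G,\sigma),$$ where $\tilde\pi_\sigma(\xi)$ denotes the operator-norm sum of $\sum_{g\in G}\xi(g)\Lambda_\sigma(g)$.
   Context: $G$ is a discrete group with identity $e$, and $\sigma : G\times G \to \mathbb{T}$ is a normalized 2-cocycle ($\sigma(g,h)\sigma(gh,k)=\sigma(h,k)\sigma(g,hk)$, $\sigma(g,e)=\sigma(e,g)=1$). $\Lambda_\sigma(g)$ is the unitary on $\ell^2(G)$ given by $(\Lambda_\sigma(g)\xi)(h)=\sigma(g,g^{-1}h)\xi(g^{-1}h)$; $\lambda=\Lambda_1$. $C^*_r(G,\sigma)$ (resp. $vN(G,\sigma)$) is the operator-norm (resp. weak-operator) closed $*$-subalgebra of $B(\ell^2(G))$ generated by $\Lambda_\sigma(G)$; $C^*_r(G)=C^*_r(G,1)$. For $x\in vN(G,\sigma)$, $\widehat x=x\delta_e\in\ell^2(G)$; the Fourier series of $x$ is $\sum_g\widehat x(g)\Lambda_\sigma(g)$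 (series over $G$ converge as nets of finite partial sums); $CF(G,\sigma)$ is the set of $x\in C^*_r(G,\sigma)$ whose Fourier series converges in operator norm. $\mathcal{K}(G)$ = finitely supported functions, $\pi_\sigma(f)=\sum_g f(g)\Lambda_\sigma(g)$, $\pi_\lambda=\pi_1$. For $\kappa:G\to[1,\infty)$, $\mathcal{L}^2_\kappa=\{\xi:G\to\mathbb{C}\mid \xi\kappa\in\ell^2(G)\}$ with norm $\|\xi\|_{2,\kappa}=\|\xi\kappa\|_2$. For a subspace $\mathcal{L}\supseteq\mathcal{K}(G)$ of $\ell^2(G)$ with norm $\|\cdot\|'$, $(G,\sigma)$ has the $\mathcal{L}$-decay property w.r.t. $\|\cdot\|'$ if (i) for every $\xi\in\mathcal{L}$ and $\varepsilon>0$ there is a finite $F_0$ with $\|\xi\chi_F\|'<\varepsilon$ for all finite $F$ disjoint from $F_0$, and (ii) $f\mapsto\pi_\sigma(f)$ is bounded from $(\mathcal{K}(G),\|\cdot\|')$ to $C^*_r(G,\sigma)$. $(G,\sigma)$ is $\kappa$-decaying if it has the $\mathcal{L}^2_\kappa$-decay property w.r.t. $\|\cdot\|_{2,\kappa}$; $G$ is $\kappa$-decaying if $(G,1)$ is. *)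

theory Defs
  imports "HOL-Analysis.Analysis"
begin

text \<open>The discrete group G is modelled as a type of class group_add (not necessarily
commutative), written additively: identity 0, product g + h, inverse - g.
Vectors of l2(G) are functions G => complex; operators are functions on such functions,
normalised to vanish outside l2(G) so that bounded operators are determined uniquely.\<close>

definition ell2 :: "('g \<Rightarrow> complex) set" where
  "ell2 = {\<xi>. (\<lambda>g. (cmod (\<xi> g))^2) summable_on UNIV}"

definition l2norm :: "('g \<Rightarrow> complex) \<Rightarrow> real" where
  "l2norm \<xi> = sqrt (\<Sum>\<^sub>\<infinity>g. (cmod (\<xi> g))^2)"

definition l2inner :: "('g \<Rightarrow> complex) \<Rightarrow> ('g \<Rightarrow> complex) \<Rightarrow> complex" where
  "l2inner \<xi> \<eta> = (\<Sum>\<^sub>\<infinity>g. \<xi> g * cnj (\<eta> g))"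

type_synonym 'g op = "('g \<Rightarrow> complex) \<Rightarrow> ('g \<Rightarrow> complex)"

definition bdd_ops :: "'g op set" where
  "bdd_ops = {T. (\<forall>\<xi>\<in>ell2. T \<xi> \<in> ell2)
     \<and> (\<forall>\<xi>\<in>ell2. \<forall>\<eta>\<in>ell2. \<forall>a b. T (\<lambda>g. a * \<xi> g + b * \<eta> g) = (\<lambda>g. a * T \<xi> g + b * T \<eta> g))
     \<and> (\<exists>C. \<forall>\<xi>\<in>ell2. l2norm (T \<xi>) \<le> C * l2norm \<xi>)
     \<and> (\<forall>\<xi>. \<xi> \<notin> ell2 \<longrightarrow> T \<xi> = (\<lambda>_. 0))}"

definition opnorm :: "'g op \<Rightarrow> real" where
  "opnorm T = Sup ((\<lambda>\<xi>. l2norm (T \<xi>)) ` {\<xi>\<in>ell2. l2norm \<xi> \<le> 1})"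

definition op_add :: "'g op \<Rightarrow> 'g op \<Rightarrow> 'g op" where
  "op_add S T = (\<lambda>\<xi> g. S \<xi> g + T \<xi> g)"

definition op_minus :: "'g op \<Rightarrow> 'g op \<Rightarrow> 'g op" where
  "op_minus S T = (\<lambda>\<xi> g. S \<xi> g - T \<xi> g)"

definition op_smult :: "complex \<Rightarrow> 'g op \<Rightarrow> 'g op" where
  "op_smult c T = (\<lambda>\<xi> g. c * T \<xi> g)"

definition op_adj :: "'g op \<Rightarrow> 'g op" where
  "op_adj T = (THE S. S \<in> bdd_ops \<and> (\<forall>\<xi>\<in>ell2. \<forall>\<eta>\<in>ell2. l2inner (T \<xi>) \<eta> = l2inner \<xi> (S \<eta>)))"

definition star_subalg :: "'g op set \<Rightarrow> bool" where
  "star_subalg A \<longleftrightarrow> A \<subseteq> bdd_ops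
     \<and> (\<forall>S\<in>A. \<forall>T\<in>A. op_add S T \<in> A \<and> S \<circ> T \<in> A)
     \<and> (\<forall>c. \<forall>T\<in>A. op_smult c T \<in> A)
     \<and> (\<forall>T\<in>A. op_adj T \<in> A)"

definition norm_closed :: "'g op set \<Rightarrow> bool" where
  "norm_closed A \<longleftrightarrow> (\<forall>T\<in>bdd_ops. (\<forall>\<epsilon>>0. \<exists>S\<in>A. opnorm (op_minus T S) < \<epsilon>) \<longrightarrow> T \<in> A)"

definition wot_closed :: "'g op set \<Rightarrow> bool" where
  "wot_closed A \<longleftrightarrow> (\<forall>T\<in>bdd_ops.
      (\<forall>P \<epsilon>. finite P \<and> P \<subseteq> ell2 \<times> ell2 \<and> \<epsilon> > 0 \<longrightarrow>
          (\<exists>S\<in>A. \<forall>(\<xi>,\<eta>)\<in>P. cmod (l2inner (T \<xi>) \<eta> - l2inner (S \<xi>) \<eta>) < \<epsilon>))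
      \<longrightarrow> T \<in> A)"

definition cocycle :: "('g::group_add \<Rightarrow> 'g \<Rightarrow> complex) \<Rightarrow> bool" where
  "cocycle \<sigma> \<longleftrightarrow> (\<forall>g h. cmod (\<sigma> g h) = 1)
     \<and> (\<forall>g h k. \<sigma> g h * \<sigma> (g + h) k = \<sigma> h k * \<sigma> g (h + k))
     \<and> (\<forall>g. \<sigma> g 0 = 1 \<and> \<sigma> 0 g = 1)"

definition triv :: "'g \<Rightarrow> 'g \<Rightarrow> complex" where
  "triv = (\<lambda>_ _. 1)"

definition Lam :: "('g::group_add \<Rightarrow> 'g \<Rightarrow> complex) \<Rightarrow> 'g \<Rightarrow> 'g op" where
  "Lam \<sigma> g = (\<lambda>\<xi>. if \<xi> \<in> ell2 then (\<lambda>h. \<sigma> g (- g + h) * \<xi> (- g + h)) else (\<lambda>_. 0))"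

definition Cr :: "('g::group_add \<Rightarrow> 'g \<Rightarrow> complex) \<Rightarrow> 'g op set" where
  "Cr \<sigma> = \<Inter>{A. star_subalg A \<and> norm_closed A \<and> range (Lam \<sigma>) \<subseteq> A}"

definition vN :: "('g::group_add \<Rightarrow> 'g \<Rightarrow> complex) \<Rightarrow> 'g op set" where
  "vN \<sigma> = \<Inter>{A. star_subalg A \<and> wot_closed A \<and> range (Lam \<sigma>) \<subseteq> A}"

definition delta_e :: "'g::group_add \<Rightarrow> complex" where
  "delta_e = (\<lambda>h. if h = 0 then 1 else 0)"

definition hat :: "'g::group_add op \<Rightarrow> ('g \<Rightarrow> complex)" where
  "hat x = x delta_e"

definition psum :: "('g::group_add \<Rightarrow> 'g \<Rightarrow> complex) \<Rightarrow> ('g \<Rightarrow> complex) \<Rightarrow> 'g set \<Rightarrow> 'g op" where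
  "psum \<sigma> f F = (\<lambda>\<xi> h. \<Sum>g\<in>F. f g * Lam \<sigma> g \<xi> h)"

definition Kfin :: "('g \<Rightarrow> complex) set" where
  "Kfin = {f. finite {g. f g \<noteq> 0}}"

definition piS :: "('g::group_add \<Rightarrow> 'g \<Rightarrow> complex) \<Rightarrow> ('g \<Rightarrow> complex) \<Rightarrow> 'g op" where
  "piS \<sigma> f = psum \<sigma> f {g. f g \<noteq> 0}"

definition op_net_conv :: "('g set \<Rightarrow> 'g op) \<Rightarrow> 'g op \<Rightarrow> bool" where
  "op_net_conv P T \<longleftrightarrow> (\<forall>\<epsilon>>0. \<exists>F0. finite F0 \<and>
       (\<forall>F. finite F \<and> F0 \<subseteq> F \<longrightarrow> opnorm (op_minus (P F) T) < \<epsilon>))"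

definition CF :: "('g::group_add \<Rightarrow> 'g \<Rightarrow> complex) \<Rightarrow> 'g op set" where
  "CF \<sigma> = {x \<in> Cr \<sigma>. \<exists>T\<in>bdd_ops. op_net_conv (psum \<sigma> (hat x)) T}"

definition tpi :: "('g::group_add \<Rightarrow> 'g \<Rightarrow> complex) \<Rightarrow> ('g \<Rightarrow> complex) \<Rightarrow> 'g op" where
  "tpi \<sigma> \<xi> = (THE T. T \<in> bdd_ops \<and> op_net_conv (psum \<sigma> \<xi>) T)"

definition L2k :: "('g \<Rightarrow> real) \<Rightarrow> ('g \<Rightarrow> complex) set" where
  "L2k \<kappa> = {\<xi>. (\<lambda>g. \<xi> g * complex_of_real (\<kappa> g)) \<in> ell2}"

definition norm2k :: "('g \<Rightarrow> real) \<Rightarrow> ('g \<Rightarrow> complex) \<Rightarrow> real" where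
  "norm2k \<kappa> \<xi> = l2norm (\<lambda>g. \<xi> g * complex_of_real (\<kappa> g))"

definition chiF :: "'g set \<Rightarrow> ('g \<Rightarrow> complex) \<Rightarrow> ('g \<Rightarrow> complex)" where
  "chiF F \<xi> = (\<lambda>g. if g \<in> F then \<xi> g else 0)"

definition pi_bounded :: "('g::group_add \<Rightarrow> 'g \<Rightarrow> complex) \<Rightarrow> (('g \<Rightarrow> complex) \<Rightarrow> real) \<Rightarrow> bool" where
  "pi_bounded \<sigma> nrm \<longleftrightarrow> (\<exists>C. \<forall>f\<in>Kfin. opnorm (piS \<sigma> f) \<le> C * nrm f)"

definition decay_prop :: "('g::group_add \<Rightarrow> 'g \<Rightarrow> complex) \<Rightarrow> ('g \<Rightarrow> complex) set \<Rightarrow> (('g \<Rightarrow> complex) \<Rightarrow> real) \<Rightarrow> bool" where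
  "decay_prop \<sigma> L nrm \<longleftrightarrow>
     (\<forall>\<xi>\<in>L. \<forall>\<epsilon>>0. \<exists>F0. finite F0 \<and> (\<forall>F. finite F \<and> F \<inter> F0 = {} \<longrightarrow> nrm (chiF F \<xi>) < \<epsilon>))
     \<and> pi_bounded \<sigma> nrm"

definition kappa_decaying :: "('g::group_add \<Rightarrow> 'g \<Rightarrow> complex) \<Rightarrow> ('g \<Rightarrow> real) \<Rightarrow> bool" where
  "kappa_decaying \<sigma> \<kappa> \<longleftrightarrow> decay_prop \<sigma> (L2k \<kappa>) (norm2k \<kappa>)"

end

theory Submission
  imports Defs
begin

text \<open>Condition (i) of the decay property holds for every \<open>\<xi> \<in> \<L>\<^sup>2\<^sub>\<kappa>\<close>: it is the tail
  estimate of the square-summable function \<open>\<xi> \<kappa>\<close>. So only the bound (ii) matters, and it passes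
  from the trivial cocycle to any \<open>\<sigma>\<close> because \<open>|\<pi>\<^sub>\<sigma>(f) \<xi>| \<le> \<pi>\<^sub>\<lambda>(|f|) |\<xi>|\<close> pointwise.

  Given the decay property, two partial sums of the Fourier series of \<open>\<xi>\<close> differ by
  \<open>\<pi>\<^sub>\<sigma>(\<chi>\<^sub>F \<xi>)\<close> for a finite \<open>F\<close> far out, whose norm is bounded by a tail of \<open>\<xi>\<close>; so the
  series converges in norm, and its sum lies in \<open>C\<^sup>*\<^sub>r(G,\<sigma>)\<close> and \<open>vN(G,\<sigma>)\<close> with Fourier
  coefficients \<open>\<xi>\<close>. Conversely an \<open>x \<in> vN(G,\<sigma>)\<close> commutes with the right regular
  \<open>\<sigma>\<close>-representation, whose commutant is a weakly closed \<open>*\<close>-algebra containing \<open>\<Lambda>\<^sub>\<sigma>(G)\<close>,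
  and is therefore determined by \<open>\<widehat>x\<close>.\<close>

section \<open>The Hilbert space \<open>\<ell>\<^sup>2\<close>\<close>

lemma ell2_iff_bdd_finite_sums:
  "\<xi> \<in> ell2 \<longleftrightarrow> (\<exists>B. \<forall>H. finite H \<longrightarrow> (\<Sum>g\<in>H. (cmod (\<xi> g))^2) \<le> B)"
proof
  assume "\<xi> \<in> ell2"
  then have s: "(\<lambda>g. (cmod (\<xi> g))^2) summable_on UNIV" by (simp add: ell2_def)
  show "\<exists>B. \<forall>H. finite H \<longrightarrow> (\<Sum>g\<in>H. (cmod (\<xi> g))^2) \<le> B"
    by (rule exI[of _ "\<Sum>\<^sub>\<infinity>g. (cmod (\<xi> g))^2"]) (auto intro!: finite_sum_le_infsum[OF s])
next
  assume "\<exists>B. \<forall>H. finite H \<longrightarrow> (\<Sum>g\<in>H. (cmod (\<xi> g))^2) \<le> B"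
  then obtain B where B: "\<And>H. finite H \<Longrightarrow> (\<Sum>g\<in>H. (cmod (\<xi> g))^2) \<le> B" by blast
  have "(\<lambda>g. (cmod (\<xi> g))^2) summable_on UNIV"
    by (rule nonneg_bdd_above_summable_on) (auto intro!: bdd_aboveI[where M=B] B)
  then show "\<xi> \<in> ell2" by (simp add: ell2_def)
qed

lemma l2norm_nonneg [simp]: "l2norm \<xi> \<ge> 0"
  unfolding l2norm_def by (intro real_sqrt_ge_zero infsum_nonneg) simp

lemma l2norm_power2: "\<xi> \<in> ell2 \<Longrightarrow> (l2norm \<xi>)^2 = (\<Sum>\<^sub>\<infinity>g. (cmod (\<xi> g))^2)"
  unfolding l2norm_def by (subst real_sqrt_pow2) (auto intro!: infsum_nonneg)

lemma finite_sum_le_l2norm_power2: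
  assumes "\<xi> \<in> ell2" "finite H"
  shows "(\<Sum>g\<in>H. (cmod (\<xi> g))^2) \<le> (l2norm \<xi>)^2"
  using assms by (auto simp: l2norm_power2 ell2_def intro!: finite_sum_le_infsum)

lemma ell2_l2norm_leI:
  assumes "B \<ge> 0" "\<And>H. finite H \<Longrightarrow> (\<Sum>g\<in>H. (cmod (\<xi> g))^2) \<le> B^2"
  shows "\<xi> \<in> ell2 \<and> l2norm \<xi> \<le> B"
proof -
  have e: "\<xi> \<in> ell2" using assms(2) ell2_iff_bdd_finite_sums by blast
  then have s: "(\<lambda>g. (cmod (\<xi> g))^2) summable_on UNIV" by (simp add: ell2_def)
  have "(\<Sum>\<^sub>\<infinity>g. (cmod (\<xi> g))^2) \<le> B^2"
    by (rule infsum_le_finite_sums[OF s]) (use assms in auto)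
  then have "l2norm \<xi> \<le> sqrt (B^2)" unfolding l2norm_def by (rule real_sqrt_le_mono)
  with assms(1) e show ?thesis by simp
qed

lemma L2_set_le_l2norm:
  assumes "\<xi> \<in> ell2" "finite H"
  shows "L2_set (\<lambda>g. cmod (\<xi> g)) H \<le> l2norm \<xi>"
proof -
  have "L2_set (\<lambda>g. cmod (\<xi> g)) H = sqrt (\<Sum>g\<in>H. (cmod (\<xi> g))^2)" by (simp add: L2_set_def)
  also have "\<dots> \<le> sqrt ((l2norm \<xi>)^2)"
    using finite_sum_le_l2norm_power2[OF assms] real_sqrt_le_mono by blast
  finally show ?thesis by simp
qed

lemma ell2_l2norm_le_pointwise_combination:
  assumes "\<xi> \<in> ell2" "\<eta> \<in> ell2" "a \<ge> 0" "b \<ge> 0"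
    and "\<And>g. cmod (\<zeta> g) \<le> a * cmod (\<xi> g) + b * cmod (\<eta> g)"
  shows "\<zeta> \<in> ell2 \<and> l2norm \<zeta> \<le> a * l2norm \<xi> + b * l2norm \<eta>"
proof (rule ell2_l2norm_leI)
  show "0 \<le> a * l2norm \<xi> + b * l2norm \<eta>" using assms by simp
  fix H :: "'a set" assume H: "finite H"
  have "L2_set (\<lambda>g. cmod (\<zeta> g)) H \<le> L2_set (\<lambda>g. a * cmod (\<xi> g) + b * cmod (\<eta> g)) H"
    by (rule L2_set_mono) (use assms in auto)
  also have "\<dots> \<le> L2_set (\<lambda>g. a * cmod (\<xi> g)) H + L2_set (\<lambda>g. b * cmod (\<eta> g)) H"
    by (rule L2_set_triangle_ineq)
  also have "\<dots> = a * L2_set (\<lambda>g. cmod (\<xi> g)) H + b * L2_set (\<lambda>g. cmod (\<eta> g)) H"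
    using assms by (simp add: L2_set_right_distrib)
  also have "\<dots> \<le> a * l2norm \<xi> + b * l2norm \<eta>"
    using assms H by (intro add_mono mult_left_mono L2_set_le_l2norm) auto
  finally have *: "L2_set (\<lambda>g. cmod (\<zeta> g)) H \<le> a * l2norm \<xi> + b * l2norm \<eta>" .
  have "(\<Sum>g\<in>H. (cmod (\<zeta> g))^2) = (L2_set (\<lambda>g. cmod (\<zeta> g)) H)^2"
    by (simp add: L2_set_def sum_nonneg)
  also have "\<dots> \<le> (a * l2norm \<xi> + b * l2norm \<eta>)^2"
    using * by (intro power_mono) auto
  finally show "(\<Sum>g\<in>H. (cmod (\<zeta> g))^2) \<le> (a * l2norm \<xi> + b * l2norm \<eta>)^2" .
qed

lemma ell2_l2norm_le_pointwise:
  assumes "\<xi> \<in> ell2" "a \<ge> 0" "\<And>g. cmod (\<zeta> g) \<le> a * cmod (\<xi> g)"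
  shows "\<zeta> \<in> ell2 \<and> l2norm \<zeta> \<le> a * l2norm \<xi>"
  using ell2_l2norm_le_pointwise_combination[OF assms(1) assms(1) assms(2), of 0 \<zeta>] assms by simp

lemma ell2_cmod_cong:
  assumes "\<And>h. cmod (\<xi> h) = cmod (\<eta> h)"
  shows "(\<xi> \<in> ell2 \<longleftrightarrow> \<eta> \<in> ell2) \<and> l2norm \<xi> = l2norm \<eta>"
  using assms by (simp add: ell2_def l2norm_def)

lemma ell2_reindex_bij:
  fixes p q :: "'a \<Rightarrow> 'a"
  assumes "\<And>x. p (q x) = x" "\<And>x. q (p x) = x"
  shows "((\<lambda>h. \<xi> (p h)) \<in> ell2 \<longleftrightarrow> \<xi> \<in> ell2) \<and> l2norm (\<lambda>h. \<xi> (p h)) = l2norm \<xi>"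
proof -
  have "(\<lambda>h. (cmod (\<xi> (p h)))^2) summable_on UNIV \<longleftrightarrow> (\<lambda>h. (cmod (\<xi> h))^2) summable_on UNIV"
    by (rule summable_on_reindex_bij_witness[of UNIV q p]) (use assms in auto)
  moreover have "(\<Sum>\<^sub>\<infinity>h. (cmod (\<xi> (p h)))^2) = (\<Sum>\<^sub>\<infinity>h. (cmod (\<xi> h))^2)"
    by (rule infsum_reindex_bij_witness[of UNIV q p]) (use assms in auto)
  ultimately show ?thesis by (simp add: ell2_def l2norm_def)
qed

lemma zero_ell2 [simp]: "(\<lambda>_. 0) \<in> ell2"
  by (simp add: ell2_def)

lemma l2norm_zero [simp]: "l2norm (\<lambda>_. 0) = 0"
  by (simp add: l2norm_def)

lemma l2norm_le_zero_imp_zero: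
  assumes "\<xi> \<in> ell2" "l2norm \<xi> \<le> 0"
  shows "\<xi> = (\<lambda>_. 0)"
proof
  fix g
  have "(\<Sum>h\<in>{g}. (cmod (\<xi> h))^2) \<le> (l2norm \<xi>)^2"
    by (rule finite_sum_le_l2norm_power2) (use assms in auto)
  then show "\<xi> g = 0" using assms l2norm_nonneg[of \<xi>] by simp
qed

lemma ell2_linear:
  assumes "\<xi> \<in> ell2" "\<eta> \<in> ell2"
  shows "(\<lambda>g. a * \<xi> g + b * \<eta> g) \<in> ell2"
  using ell2_l2norm_le_pointwise_combination[OF assms, of "cmod a" "cmod b" "\<lambda>g. a * \<xi> g + b * \<eta> g"]
  by (simp add: norm_mult[symmetric] norm_triangle_ineq)

lemma ell2_add: "\<xi> \<in> ell2 \<Longrightarrow> \<eta> \<in> ell2 \<Longrightarrow> (\<lambda>g. \<xi> g + \<eta> g) \<in> ell2"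
  using ell2_linear[of \<xi> \<eta> 1 1] by simp

lemma ell2_diff: "\<xi> \<in> ell2 \<Longrightarrow> \<eta> \<in> ell2 \<Longrightarrow> (\<lambda>g. \<xi> g - \<eta> g) \<in> ell2"
  using ell2_linear[of \<xi> \<eta> 1 "-1"] by simp

lemma ell2_scale: "\<xi> \<in> ell2 \<Longrightarrow> (\<lambda>g. a * \<xi> g) \<in> ell2"
  using ell2_linear[of \<xi> \<xi> a 0] by simp

lemma ell2_sum:
  "finite H \<Longrightarrow> (\<And>g. g \<in> H \<Longrightarrow> \<zeta> g \<in> ell2) \<Longrightarrow> (\<lambda>h. \<Sum>g\<in>H. c g * \<zeta> g h) \<in> ell2"
proof (induction H rule: finite_induct)
  case (insert x F)
  then show ?case using ell2_linear[of "\<zeta> x" "\<lambda>h. \<Sum>g\<in>F. c g * \<zeta> g h" "c x" 1] by simp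
qed simp

lemma l2norm_add_le:
  "\<xi> \<in> ell2 \<Longrightarrow> \<eta> \<in> ell2 \<Longrightarrow> l2norm (\<lambda>g. \<xi> g + \<eta> g) \<le> l2norm \<xi> + l2norm \<eta>"
  using ell2_l2norm_le_pointwise_combination[of \<xi> \<eta> 1 1 "\<lambda>g. \<xi> g + \<eta> g"]
  by (simp add: norm_triangle_ineq)

lemma l2norm_scale_le: "\<xi> \<in> ell2 \<Longrightarrow> l2norm (\<lambda>g. a * \<xi> g) \<le> cmod a * l2norm \<xi>"
  using ell2_l2norm_le_pointwise[of \<xi> "cmod a" "\<lambda>g. a * \<xi> g"] by (simp add: norm_mult)

lemma l2norm_minus_commute: "l2norm (\<lambda>g. \<xi> g - \<eta> g) = l2norm (\<lambda>g. \<eta> g - \<xi> g)"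
  unfolding l2norm_def by (simp add: norm_minus_commute)

lemma ell2_tail_small:
  assumes "\<xi> \<in> ell2" "\<epsilon> > 0"
  obtains F0 where "finite F0" "\<And>H. finite H \<Longrightarrow> H \<inter> F0 = {} \<Longrightarrow> (\<Sum>g\<in>H. (cmod (\<xi> g))^2) < \<epsilon>"
proof -
  define f where "f g = (cmod (\<xi> g))^2" for g
  have s: "f summable_on UNIV" using assms by (simp add: ell2_def f_def[abs_def])
  define S where "S = infsum f UNIV"
  have nn: "\<And>x. f x \<ge> 0" by (simp add: f_def)
  have bdd: "bdd_above (sum f ` {F. finite F \<and> F \<subseteq> UNIV})"
    by (rule bdd_aboveI[where M=S]) (auto simp: S_def intro!: finite_sum_le_infsum[OF s] nn)
  have "S = (SUP F\<in>{F. finite F \<and> F \<subseteq> UNIV}. sum f F)"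
    unfolding S_def by (rule infsum_nonneg_is_SUPREMUM_real[OF s]) (simp add: f_def)
  then obtain F0 where F0: "finite F0" "S - \<epsilon> < sum f F0"
    using less_cSUP_iff[OF _ bdd, of "S - \<epsilon>"] assms(2) by auto
  have "sum f H < \<epsilon>" if H: "finite H" "H \<inter> F0 = {}" for H
  proof -
    have "sum f H + sum f F0 = sum f (H \<union> F0)" using H F0 by (simp add: sum.union_disjoint)
    also have "\<dots> \<le> S" unfolding S_def using H F0 by (auto intro!: finite_sum_le_infsum[OF s] nn)
    finally show ?thesis using F0 by simp
  qed
  with F0(1) show thesis using that by (auto simp: f_def)
qed

lemma chiF_ell2: "\<xi> \<in> ell2 \<Longrightarrow> chiF F \<xi> \<in> ell2"
  using ell2_l2norm_le_pointwise[of \<xi> 1 "chiF F \<xi>"] by (auto simp: chiF_def)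

lemma chiF_finite_ell2:
  assumes "finite H"
  shows "chiF H f \<in> ell2 \<and> (l2norm (chiF H f))^2 = (\<Sum>g\<in>H. (cmod (f g))^2)"
proof -
  have hs: "((\<lambda>g. (cmod (chiF H f g))^2) has_sum (\<Sum>g\<in>H. (cmod (f g))^2)) UNIV"
    by (rule has_sum_finite_neutralI[OF assms]) (auto simp: chiF_def)
  then have "chiF H f \<in> ell2" by (auto simp: ell2_def summable_on_def)
  then show ?thesis using hs by (simp add: l2norm_power2 infsumI)
qed

lemma chiF_approx:
  assumes "\<xi> \<in> ell2" "\<epsilon> > 0"
  obtains F0 where "finite F0" "\<And>F. F0 \<subseteq> F \<Longrightarrow> l2norm (\<lambda>g. \<xi> g - chiF F \<xi> g) \<le> \<epsilon>"
proof -
  obtain F0 where F0: "finite F0"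
    "\<And>H. finite H \<Longrightarrow> H \<inter> F0 = {} \<Longrightarrow> (\<Sum>g\<in>H. (cmod (\<xi> g))^2) < \<epsilon>^2"
    using ell2_tail_small[OF assms(1), of "\<epsilon>^2"] assms(2) by auto
  have "l2norm (\<lambda>g. \<xi> g - chiF F \<xi> g) \<le> \<epsilon>" if "F0 \<subseteq> F" for F
  proof -
    have "(\<lambda>g. \<xi> g - chiF F \<xi> g) \<in> ell2 \<and> l2norm (\<lambda>g. \<xi> g - chiF F \<xi> g) \<le> \<epsilon>"
    proof (rule ell2_l2norm_leI)
      fix H :: "'a set" assume H: "finite H"
      have "(\<Sum>g\<in>H. (cmod (\<xi> g - chiF F \<xi> g))^2) = (\<Sum>g\<in>H - F. (cmod (\<xi> g))^2)"
        using H by (intro sum.mono_neutral_cong_right) (auto simp: chiF_def)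
      also have "\<dots> < \<epsilon>^2" using H that by (intro F0) auto
      finally show "(\<Sum>g\<in>H. (cmod (\<xi> g - chiF F \<xi> g))^2) \<le> \<epsilon>^2" by simp
    qed (use assms in simp)
    then show ?thesis by blast
  qed
  with F0(1) show thesis using that by blast
qed

lemma ell2_l2norm_le_pointwise_limit:
  assumes lim: "\<And>h. ((\<lambda>i. \<phi> i h) \<longlongrightarrow> \<psi> h) F" and F: "F \<noteq> bot" and c: "c \<ge> 0"
    and ev: "eventually (\<lambda>i. \<phi> i \<in> ell2 \<and> l2norm (\<phi> i) \<le> c) F"
  shows "\<psi> \<in> ell2 \<and> l2norm \<psi> \<le> c"
proof (rule ell2_l2norm_leI[OF c])
  fix H :: "'a set" assume H: "finite H"
  have "((\<lambda>i. \<Sum>h\<in>H. (cmod (\<phi> i h))^2) \<longlongrightarrow> (\<Sum>h\<in>H. (cmod (\<psi> h))^2)) F"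
    by (intro tendsto_sum tendsto_power tendsto_norm lim)
  moreover have "eventually (\<lambda>i. (\<Sum>h\<in>H. (cmod (\<phi> i h))^2) \<le> c^2) F"
    using ev
  proof eventually_elim
    case (elim i)
    then have "(l2norm (\<phi> i))^2 \<le> c^2" by (intro power_mono) auto
    with elim H show ?case using finite_sum_le_l2norm_power2 order_trans by blast
  qed
  ultimately show "(\<Sum>h\<in>H. (cmod (\<psi> h))^2) \<le> c^2" using F by (rule tendsto_upperbound)
qed

definition delta_at :: "'g \<Rightarrow> 'g \<Rightarrow> complex" where
  "delta_at j = (\<lambda>h. if h = j then 1 else 0)"

lemma delta_at_ell2 [simp]: "delta_at j \<in> ell2"
  using chiF_finite_ell2[of "{j}" "\<lambda>_. 1"] by (simp add: chiF_def delta_at_def)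

lemma chiF_eq_sum_delta_at: "finite F \<Longrightarrow> chiF F \<xi> = (\<lambda>h. \<Sum>g\<in>F. \<xi> g * delta_at g h)"
  by (auto simp: chiF_def delta_at_def fun_eq_iff if_distrib cong: if_cong)

lemma delta_e_eq: "delta_e = delta_at 0"
  by (simp add: delta_e_def delta_at_def fun_eq_iff)

lemma l2inner_abs_summable:
  assumes "\<xi> \<in> ell2" "\<eta> \<in> ell2"
  shows "(\<lambda>g. cmod (\<xi> g * cnj (\<eta> g))) summable_on UNIV"
    and "(\<Sum>\<^sub>\<infinity>g. cmod (\<xi> g * cnj (\<eta> g))) \<le> l2norm \<xi> * l2norm \<eta>"
proof -
  have fin: "(\<Sum>g\<in>H. cmod (\<xi> g * cnj (\<eta> g))) \<le> l2norm \<xi> * l2norm \<eta>" if "finite H" for H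
  proof -
    have "(\<Sum>g\<in>H. cmod (\<xi> g * cnj (\<eta> g))) = (\<Sum>g\<in>H. \<bar>cmod (\<xi> g)\<bar> * \<bar>cmod (\<eta> g)\<bar>)"
      by (simp add: norm_mult)
    also have "\<dots> \<le> L2_set (\<lambda>g. cmod (\<xi> g)) H * L2_set (\<lambda>g. cmod (\<eta> g)) H"
      by (rule L2_set_mult_ineq)
    also have "\<dots> \<le> l2norm \<xi> * l2norm \<eta>"
      using assms that by (intro mult_mono L2_set_le_l2norm) auto
    finally show ?thesis .
  qed
  show s: "(\<lambda>g. cmod (\<xi> g * cnj (\<eta> g))) summable_on UNIV"
    by (rule nonneg_bdd_above_summable_on) (auto intro!: bdd_aboveI[where M="l2norm \<xi> * l2norm \<eta>"] fin)
  show "(\<Sum>\<^sub>\<infinity>g. cmod (\<xi> g * cnj (\<eta> g))) \<le> l2norm \<xi> * l2norm \<eta>"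
    by (rule infsum_le_finite_sums[OF s]) (use fin in auto)
qed

lemma l2inner_summable:
  "\<xi> \<in> ell2 \<Longrightarrow> \<eta> \<in> ell2 \<Longrightarrow> (\<lambda>g. \<xi> g * cnj (\<eta> g)) summable_on UNIV"
  by (rule abs_summable_summable) (use l2inner_abs_summable[of \<xi> \<eta>] in auto)

lemma l2inner_Cauchy_Schwarz:
  assumes "\<xi> \<in> ell2" "\<eta> \<in> ell2"
  shows "cmod (l2inner \<xi> \<eta>) \<le> l2norm \<xi> * l2norm \<eta>"
proof -
  have "cmod (l2inner \<xi> \<eta>) \<le> (\<Sum>\<^sub>\<infinity>g. cmod (\<xi> g * cnj (\<eta> g)))"
    unfolding l2inner_def using l2inner_abs_summable[OF assms] by (intro norm_infsum_bound) auto
  then show ?thesis using l2inner_abs_summable(2)[OF assms] by linarith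
qed

lemma l2inner_linear_left:
  assumes "\<xi> \<in> ell2" "\<eta> \<in> ell2" "\<zeta> \<in> ell2"
  shows "l2inner (\<lambda>g. a * \<xi> g + b * \<eta> g) \<zeta> = a * l2inner \<xi> \<zeta> + b * l2inner \<eta> \<zeta>"
proof -
  have s1: "(\<lambda>g. a * (\<xi> g * cnj (\<zeta> g))) summable_on UNIV"
    using l2inner_summable[OF assms(1,3)] by (rule summable_on_cmult_right)
  have s2: "(\<lambda>g. b * (\<eta> g * cnj (\<zeta> g))) summable_on UNIV"
    using l2inner_summable[OF assms(2,3)] by (rule summable_on_cmult_right)
  have "l2inner (\<lambda>g. a * \<xi> g + b * \<eta> g) \<zeta>
      = (\<Sum>\<^sub>\<infinity>g. a * (\<xi> g * cnj (\<zeta> g)) + b * (\<eta> g * cnj (\<zeta> g)))"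
    unfolding l2inner_def by (simp add: algebra_simps)
  also have "\<dots> = (\<Sum>\<^sub>\<infinity>g. a * (\<xi> g * cnj (\<zeta> g))) + (\<Sum>\<^sub>\<infinity>g. b * (\<eta> g * cnj (\<zeta> g)))"
    by (rule infsum_add[OF s1 s2])
  also have "\<dots> = a * l2inner \<xi> \<zeta> + b * l2inner \<eta> \<zeta>"
    unfolding l2inner_def by (simp add: infsum_cmult_right')
  finally show ?thesis .
qed

lemma l2inner_commute_cnj: "l2inner \<eta> \<xi> = cnj (l2inner \<xi> \<eta>)"
  unfolding l2inner_def by (simp flip: infsum_cnj add: mult.commute)

lemma l2inner_linear_right:
  assumes "\<xi> \<in> ell2" "\<eta> \<in> ell2" "\<zeta> \<in> ell2"
  shows "l2inner \<zeta> (\<lambda>g. a * \<xi> g + b * \<eta> g) = cnj a * l2inner \<zeta> \<xi> + cnj b * l2inner \<zeta> \<eta>"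
  using l2inner_linear_left[OF assms, of a b] by (subst (1 2 3) l2inner_commute_cnj) simp

lemma l2inner_diff_left:
  assumes "\<xi> \<in> ell2" "\<eta> \<in> ell2" "\<zeta> \<in> ell2"
  shows "l2inner (\<lambda>g. \<xi> g - \<eta> g) \<zeta> = l2inner \<xi> \<zeta> - l2inner \<eta> \<zeta>"
  using l2inner_linear_left[OF assms, of 1 "-1"] by simp

lemma l2inner_sum_left:
  assumes "\<eta> \<in> ell2"
  shows "finite H \<Longrightarrow> (\<And>g. g \<in> H \<Longrightarrow> \<zeta> g \<in> ell2) \<Longrightarrow>
    l2inner (\<lambda>h. \<Sum>g\<in>H. c g * \<zeta> g h) \<eta> = (\<Sum>g\<in>H. c g * l2inner (\<zeta> g) \<eta>)"
proof (induction H rule: finite_induct)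
  case empty
  then show ?case by (simp add: l2inner_def)
next
  case (insert x F)
  have "l2inner (\<lambda>h. c x * \<zeta> x h + 1 * (\<Sum>g\<in>F. c g * \<zeta> g h)) \<eta>
      = c x * l2inner (\<zeta> x) \<eta> + 1 * l2inner (\<lambda>h. \<Sum>g\<in>F. c g * \<zeta> g h) \<eta>"
    by (rule l2inner_linear_left) (use insert assms ell2_sum[of F \<zeta> c] in auto)
  then show ?case using insert by simp
qed

lemma l2inner_delta_at_right [simp]: "l2inner \<xi> (delta_at j) = \<xi> j"
proof -
  have "((\<lambda>g. \<xi> g * cnj (delta_at j g)) has_sum \<xi> j) UNIV"
    by (rule has_sum_finite_neutralI[of "{j}"]) (auto simp: delta_at_def)
  then show ?thesis by (simp add: l2inner_def infsumI)
qed

lemma l2inner_delta_at_left [simp]: "l2inner (delta_at j) \<xi> = cnj (\<xi> j)"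
  by (subst l2inner_commute_cnj) simp

section \<open>Bounded operators\<close>

lemma bdd_opsI:
  assumes "\<And>\<xi>. \<xi> \<in> ell2 \<Longrightarrow> T \<xi> \<in> ell2"
    and "\<And>\<xi> \<eta> a b. \<xi> \<in> ell2 \<Longrightarrow> \<eta> \<in> ell2 \<Longrightarrow>
      T (\<lambda>g. a * \<xi> g + b * \<eta> g) = (\<lambda>g. a * T \<xi> g + b * T \<eta> g)"
    and "\<And>\<xi>. \<xi> \<in> ell2 \<Longrightarrow> l2norm (T \<xi>) \<le> C * l2norm \<xi>"
    and "\<And>\<xi>. \<xi> \<notin> ell2 \<Longrightarrow> T \<xi> = (\<lambda>_. 0)"
  shows "T \<in> bdd_ops"
  unfolding bdd_ops_def using assms by blast

lemma bdd_ops_ell2: "T \<in> bdd_ops \<Longrightarrow> \<xi> \<in> ell2 \<Longrightarrow> T \<xi> \<in> ell2"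
  by (simp add: bdd_ops_def)

lemma bdd_ops_linear: "T \<in> bdd_ops \<Longrightarrow> \<xi> \<in> ell2 \<Longrightarrow> \<eta> \<in> ell2 \<Longrightarrow>
   T (\<lambda>g. a * \<xi> g + b * \<eta> g) = (\<lambda>g. a * T \<xi> g + b * T \<eta> g)"
  by (simp add: bdd_ops_def)

lemma bdd_ops_outside: "T \<in> bdd_ops \<Longrightarrow> \<xi> \<notin> ell2 \<Longrightarrow> T \<xi> = (\<lambda>_. 0)"
  by (simp add: bdd_ops_def)

lemma bdd_ops_zero: "T \<in> bdd_ops \<Longrightarrow> T (\<lambda>_. 0) = (\<lambda>_. 0)"
  using bdd_ops_linear[of T "\<lambda>_. 0" "\<lambda>_. 0" 0 0] by simp

lemma bdd_ops_scale: "T \<in> bdd_ops \<Longrightarrow> \<xi> \<in> ell2 \<Longrightarrow> T (\<lambda>g. a * \<xi> g) = (\<lambda>g. a * T \<xi> g)"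
  using bdd_ops_linear[of T \<xi> \<xi> a 0] by simp

lemma bdd_ops_diff:
  "T \<in> bdd_ops \<Longrightarrow> \<xi> \<in> ell2 \<Longrightarrow> \<eta> \<in> ell2 \<Longrightarrow> T (\<lambda>g. \<xi> g - \<eta> g) = (\<lambda>g. T \<xi> g - T \<eta> g)"
  using bdd_ops_linear[of T \<xi> \<eta> 1 "-1"] by simp

lemma bdd_ops_sum:
  assumes "T \<in> bdd_ops"
  shows "finite H \<Longrightarrow> (\<And>g. g \<in> H \<Longrightarrow> \<zeta> g \<in> ell2) \<Longrightarrow>
    T (\<lambda>h. \<Sum>g\<in>H. c g * \<zeta> g h) = (\<lambda>h. \<Sum>g\<in>H. c g * T (\<zeta> g) h)"
proof (induction H rule: finite_induct)
  case empty
  then show ?case using bdd_ops_zero[OF assms] by simp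
next
  case (insert x F)
  have "T (\<lambda>h. c x * \<zeta> x h + 1 * (\<Sum>g\<in>F. c g * \<zeta> g h))
      = (\<lambda>h. c x * T (\<zeta> x) h + 1 * T (\<lambda>h. \<Sum>g\<in>F. c g * \<zeta> g h) h)"
    by (rule bdd_ops_linear[OF assms]) (use insert ell2_sum[of F \<zeta> c] in auto)
  then show ?case using insert by simp
qed

lemma bdd_ops_bound: "T \<in> bdd_ops \<Longrightarrow> \<exists>C\<ge>0. \<forall>\<xi>\<in>ell2. l2norm (T \<xi>) \<le> C * l2norm \<xi>"
proof -
  assume "T \<in> bdd_ops"
  then obtain C where C: "\<forall>\<xi>\<in>ell2. l2norm (T \<xi>) \<le> C * l2norm \<xi>" by (auto simp: bdd_ops_def)
  have "C * l2norm \<xi> \<le> max C 0 * l2norm \<xi>" for \<xi> :: "'a \<Rightarrow> complex"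
    by (intro mult_right_mono) auto
  with C show ?thesis by (intro exI[of _ "max C 0"]) (auto intro: order_trans)
qed

lemma opnorm_upper:
  assumes "T \<in> bdd_ops" "\<xi> \<in> ell2" "l2norm \<xi> \<le> 1"
  shows "l2norm (T \<xi>) \<le> opnorm T"
proof -
  obtain C where C: "C \<ge> 0" "\<forall>\<xi>\<in>ell2. l2norm (T \<xi>) \<le> C * l2norm \<xi>"
    using bdd_ops_bound[OF assms(1)] by blast
  have "l2norm (T \<zeta>) \<le> C" if "\<zeta> \<in> ell2" "l2norm \<zeta> \<le> 1" for \<zeta>
    using C that mult_left_le[of "l2norm \<zeta>" C] by force
  then have "bdd_above ((\<lambda>\<xi>. l2norm (T \<xi>)) ` {\<xi>\<in>ell2. l2norm \<xi> \<le> 1})"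
    by (intro bdd_aboveI[where M=C]) auto
  then show ?thesis unfolding opnorm_def using assms by (intro cSup_upper) auto
qed

lemma opnorm_nonneg:
  assumes "T \<in> bdd_ops"
  shows "opnorm T \<ge> 0"
proof -
  have "l2norm (T (\<lambda>_. 0)) \<le> opnorm T" by (rule opnorm_upper) (simp_all add: assms)
  then show ?thesis using l2norm_nonneg order_trans by blast
qed

lemma l2norm_le_opnorm:
  assumes T: "T \<in> bdd_ops" and x: "\<xi> \<in> ell2"
  shows "l2norm (T \<xi>) \<le> opnorm T * l2norm \<xi>"
proof (cases "l2norm \<xi> = 0")
  case True
  then have "\<xi> = (\<lambda>_. 0)" using l2norm_le_zero_imp_zero x by fastforce
  then show ?thesis using bdd_ops_zero[OF T] by simp
next
  case False
  define r where "r = l2norm \<xi>"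
  have r: "r > 0" using False l2norm_nonneg[of \<xi>] unfolding r_def by linarith
  define \<zeta> where "\<zeta> = (\<lambda>g. complex_of_real (1 / r) * \<xi> g)"
  have z: "\<zeta> \<in> ell2" unfolding \<zeta>_def by (rule ell2_scale[OF x])
  have "l2norm \<zeta> \<le> cmod (complex_of_real (1 / r)) * l2norm \<xi>"
    unfolding \<zeta>_def by (rule l2norm_scale_le[OF x])
  also have "\<dots> = 1" using r by (simp add: r_def norm_divide)
  finally have z1: "l2norm \<zeta> \<le> 1" .
  have "\<xi> = (\<lambda>g. complex_of_real r * \<zeta> g)" using r by (auto simp: \<zeta>_def fun_eq_iff)
  then have "T \<xi> = (\<lambda>g. complex_of_real r * T \<zeta> g)" using bdd_ops_scale[OF T z] by simp
  then have "l2norm (T \<xi>) \<le> r * l2norm (T \<zeta>)"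
    using l2norm_scale_le[OF bdd_ops_ell2[OF T z], of "complex_of_real r"] r by simp
  also have "\<dots> \<le> r * opnorm T" using r opnorm_upper[OF T z z1] by simp
  finally show ?thesis by (simp add: r_def mult.commute)
qed

lemma opnorm_le:
  assumes "B \<ge> 0" "\<And>\<xi>. \<xi> \<in> ell2 \<Longrightarrow> l2norm (T \<xi>) \<le> B * l2norm \<xi>"
  shows "opnorm T \<le> B"
  unfolding opnorm_def
proof (rule cSup_least)
  show "(\<lambda>\<xi>. l2norm (T \<xi>)) ` {\<xi> \<in> ell2. l2norm \<xi> \<le> 1} \<noteq> {}"
    by (auto intro!: exI[of _ "\<lambda>_. 0"])
  fix x assume "x \<in> (\<lambda>\<xi>. l2norm (T \<xi>)) ` {\<xi> \<in> ell2. l2norm \<xi> \<le> 1}"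
  then obtain \<xi> where "\<xi> \<in> ell2" "l2norm \<xi> \<le> 1" "x = l2norm (T \<xi>)" by auto
  moreover have "B * l2norm \<xi> \<le> B" using assms(1) \<open>l2norm \<xi> \<le> 1\<close> by (simp add: mult_left_le)
  ultimately show "x \<le> B" using assms(2) by force
qed

lemma opnorm_minus_commute: "opnorm (op_minus S T) = opnorm (op_minus T S)"
  unfolding opnorm_def op_minus_def by (subst l2norm_minus_commute) simp

lemma op_add_bdd_ops:
  assumes S: "S \<in> bdd_ops" and T: "T \<in> bdd_ops"
  shows "op_add S T \<in> bdd_ops"
proof -
  obtain C1 where C1: "\<forall>\<xi>\<in>ell2. l2norm (S \<xi>) \<le> C1 * l2norm \<xi>" using bdd_ops_bound[OF S] by blast
  obtain C2 where C2: "\<forall>\<xi>\<in>ell2. l2norm (T \<xi>) \<le> C2 * l2norm \<xi>" using bdd_ops_bound[OF T] by blast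
  show ?thesis unfolding op_add_def
  proof (rule bdd_opsI[where C="C1 + C2"])
    fix \<xi> :: "'a \<Rightarrow> complex" assume x: "\<xi> \<in> ell2"
    show "(\<lambda>g. S \<xi> g + T \<xi> g) \<in> ell2" using ell2_add[OF bdd_ops_ell2[OF S x] bdd_ops_ell2[OF T x]] .
    have "l2norm (\<lambda>g. S \<xi> g + T \<xi> g) \<le> l2norm (S \<xi>) + l2norm (T \<xi>)"
      using l2norm_add_le[OF bdd_ops_ell2[OF S x] bdd_ops_ell2[OF T x]] .
    also have "\<dots> \<le> (C1 + C2) * l2norm \<xi>" using C1 C2 x by (simp add: distrib_right add_mono)
    finally show "l2norm (\<lambda>g. S \<xi> g + T \<xi> g) \<le> (C1 + C2) * l2norm \<xi>" .
  next
    fix \<xi> \<eta> :: "'a \<Rightarrow> complex" and a b assume "\<xi> \<in> ell2" "\<eta> \<in> ell2"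
    then show "(\<lambda>g. S (\<lambda>g. a * \<xi> g + b * \<eta> g) g + T (\<lambda>g. a * \<xi> g + b * \<eta> g) g) =
        (\<lambda>g. a * (S \<xi> g + T \<xi> g) + b * (S \<eta> g + T \<eta> g))"
      by (simp add: bdd_ops_linear[OF S] bdd_ops_linear[OF T] algebra_simps)
  qed (simp add: bdd_ops_outside[OF S] bdd_ops_outside[OF T])
qed

lemma op_smult_bdd_ops:
  assumes T: "T \<in> bdd_ops"
  shows "op_smult c T \<in> bdd_ops"
proof -
  obtain C where C: "\<forall>\<xi>\<in>ell2. l2norm (T \<xi>) \<le> C * l2norm \<xi>" "C \<ge> 0" using bdd_ops_bound[OF T] by blast
  show ?thesis unfolding op_smult_def
  proof (rule bdd_opsI[where C="cmod c * C"])
    fix \<xi> :: "'a \<Rightarrow> complex" assume x: "\<xi> \<in> ell2"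
    show "(\<lambda>g. c * T \<xi> g) \<in> ell2" using ell2_scale[OF bdd_ops_ell2[OF T x]] .
    have "l2norm (\<lambda>g. c * T \<xi> g) \<le> cmod c * l2norm (T \<xi>)"
      using l2norm_scale_le[OF bdd_ops_ell2[OF T x]] .
    also have "\<dots> \<le> cmod c * (C * l2norm \<xi>)" using C x by (intro mult_left_mono) auto
    finally show "l2norm (\<lambda>g. c * T \<xi> g) \<le> cmod c * C * l2norm \<xi>" by (simp add: mult.assoc)
  next
    fix \<xi> \<eta> :: "'a \<Rightarrow> complex" and a b assume "\<xi> \<in> ell2" "\<eta> \<in> ell2"
    then show "(\<lambda>g. c * T (\<lambda>g. a * \<xi> g + b * \<eta> g) g) = (\<lambda>g. a * (c * T \<xi> g) + b * (c * T \<eta> g))"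
      by (simp add: bdd_ops_linear[OF T] algebra_simps)
  qed (simp add: bdd_ops_outside[OF T])
qed

lemma op_minus_bdd_ops: "S \<in> bdd_ops \<Longrightarrow> T \<in> bdd_ops \<Longrightarrow> op_minus S T \<in> bdd_ops"
proof -
  have "op_minus S T = op_add S (op_smult (-1) T)"
    by (simp add: op_minus_def op_add_def op_smult_def fun_eq_iff)
  then show "S \<in> bdd_ops \<Longrightarrow> T \<in> bdd_ops \<Longrightarrow> op_minus S T \<in> bdd_ops"
    by (simp add: op_add_bdd_ops op_smult_bdd_ops)
qed

lemma comp_bdd_ops:
  assumes S: "S \<in> bdd_ops" and T: "T \<in> bdd_ops"
  shows "S \<circ> T \<in> bdd_ops"
proof -
  obtain C1 where C1: "\<forall>\<xi>\<in>ell2. l2norm (S \<xi>) \<le> C1 * l2norm \<xi>" "C1 \<ge> 0" using bdd_ops_bound[OF S] by blast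
  obtain C2 where C2: "\<forall>\<xi>\<in>ell2. l2norm (T \<xi>) \<le> C2 * l2norm \<xi>" "C2 \<ge> 0" using bdd_ops_bound[OF T] by blast
  show ?thesis
  proof (rule bdd_opsI[where C="C1 * C2"])
    fix \<xi> :: "'a \<Rightarrow> complex" assume x: "\<xi> \<in> ell2"
    have "l2norm ((S \<circ> T) \<xi>) \<le> C1 * l2norm (T \<xi>)" using C1 bdd_ops_ell2[OF T x] by simp
    also have "\<dots> \<le> C1 * (C2 * l2norm \<xi>)" using C1 C2 x by (intro mult_left_mono) auto
    finally show "l2norm ((S \<circ> T) \<xi>) \<le> C1 * C2 * l2norm \<xi>" by (simp add: mult.assoc)
  qed (simp_all add: bdd_ops_ell2[OF S] bdd_ops_ell2[OF T] bdd_ops_linear[OF S] bdd_ops_linear[OF T]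
      bdd_ops_outside[OF T] bdd_ops_zero[OF S])
qed

lemma sum_bdd_ops:
  assumes "finite F" "\<And>g. g \<in> F \<Longrightarrow> A g \<in> bdd_ops"
  shows "(\<lambda>\<xi> h. \<Sum>g\<in>F. c g * A g \<xi> h) \<in> bdd_ops"
  using assms
proof (induction F rule: finite_induct)
  case empty
  show ?case by (rule bdd_opsI[where C=0]) auto
next
  case (insert x F)
  have "(\<lambda>\<xi> h. \<Sum>g\<in>insert x F. c g * A g \<xi> h)
      = op_add (op_smult (c x) (A x)) (\<lambda>\<xi> h. \<Sum>g\<in>F. c g * A g \<xi> h)"
    using insert by (simp add: op_add_def op_smult_def fun_eq_iff)
  then show ?case using insert by (simp add: op_add_bdd_ops op_smult_bdd_ops)
qed

lemma opnorm_diff_triangle: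
  assumes "S \<in> bdd_ops" "T \<in> bdd_ops" "U \<in> bdd_ops"
  shows "opnorm (op_minus S U) \<le> opnorm (op_minus S T) + opnorm (op_minus T U)"
proof (rule opnorm_le)
  show "0 \<le> opnorm (op_minus S T) + opnorm (op_minus T U)"
    using assms by (simp add: add_nonneg_nonneg opnorm_nonneg op_minus_bdd_ops)
  fix \<xi> :: "'a \<Rightarrow> complex" assume x: "\<xi> \<in> ell2"
  have "op_minus S U \<xi> = (\<lambda>h. op_minus S T \<xi> h + op_minus T U \<xi> h)"
    by (simp add: op_minus_def)
  then have "l2norm (op_minus S U \<xi>) \<le> l2norm (op_minus S T \<xi>) + l2norm (op_minus T U \<xi>)"
    using l2norm_add_le[OF bdd_ops_ell2[OF op_minus_bdd_ops[OF assms(1,2)] x]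
        bdd_ops_ell2[OF op_minus_bdd_ops[OF assms(2,3)] x]] by simp
  also have "\<dots> \<le> opnorm (op_minus S T) * l2norm \<xi> + opnorm (op_minus T U) * l2norm \<xi>"
    using assms x by (intro add_mono l2norm_le_opnorm op_minus_bdd_ops)
  finally show "l2norm (op_minus S U \<xi>) \<le> (opnorm (op_minus S T) + opnorm (op_minus T U)) * l2norm \<xi>"
    by (simp add: distrib_right)
qed

lemma bdd_ops_eqI_opnorm:
  assumes S: "S \<in> bdd_ops" and T: "T \<in> bdd_ops"
    and small: "\<And>\<epsilon>. \<epsilon> > 0 \<Longrightarrow> opnorm (op_minus S T) < \<epsilon>"
  shows "S = T"
proof
  fix \<xi> :: "'a \<Rightarrow> complex"
  show "S \<xi> = T \<xi>"
  proof (cases "\<xi> \<in> ell2")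
    case False
    then show ?thesis using bdd_ops_outside[OF S] bdd_ops_outside[OF T] by simp
  next
    case x: True
    have "opnorm (op_minus S T) \<le> 0"
    proof (rule ccontr)
      assume "\<not> opnorm (op_minus S T) \<le> 0"
      then show False using small[of "opnorm (op_minus S T)"] by simp
    qed
    then have "l2norm (op_minus S T \<xi>) \<le> 0 * l2norm \<xi>"
      using l2norm_le_opnorm[OF op_minus_bdd_ops[OF S T] x] mult_right_mono[OF _ l2norm_nonneg]
      by (meson order_trans)
    then have "op_minus S T \<xi> = (\<lambda>_. 0)"
      by (intro l2norm_le_zero_imp_zero[OF bdd_ops_ell2[OF op_minus_bdd_ops[OF S T] x]]) simp
    then show ?thesis by (simp add: op_minus_def fun_eq_iff)
  qed
qed

lemma op_net_conv_unique:
  assumes P: "\<And>F. finite F \<Longrightarrow> P F \<in> bdd_ops" and T1: "T1 \<in> bdd_ops" and T2: "T2 \<in> bdd_ops"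
    and c1: "op_net_conv P T1" and c2: "op_net_conv P T2"
  shows "T1 = T2"
proof (rule bdd_ops_eqI_opnorm[OF T1 T2])
  fix \<epsilon> :: real assume "\<epsilon> > 0"
  then have e2: "\<epsilon>/2 > 0" by simp
  obtain F1 where F1: "finite F1" "\<And>F. finite F \<and> F1 \<subseteq> F \<longrightarrow> opnorm (op_minus (P F) T1) < \<epsilon>/2"
    using c1 e2 unfolding op_net_conv_def by blast
  obtain F2 where F2: "finite F2" "\<And>F. finite F \<and> F2 \<subseteq> F \<longrightarrow> opnorm (op_minus (P F) T2) < \<epsilon>/2"
    using c2 e2 unfolding op_net_conv_def by blast
  define F where "F = F1 \<union> F2"
  have F: "finite F" "F1 \<subseteq> F" "F2 \<subseteq> F" using F1(1) F2(1) by (auto simp: F_def)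
  have "opnorm (op_minus T1 T2) \<le> opnorm (op_minus T1 (P F)) + opnorm (op_minus (P F) T2)"
    by (rule opnorm_diff_triangle[OF T1 P[OF F(1)] T2])
  also have "\<dots> < \<epsilon>/2 + \<epsilon>/2"
    using F1(2)[of F] F2(2)[of F] F by (intro add_strict_mono) (auto simp: opnorm_minus_commute)
  finally show "opnorm (op_minus T1 T2) < \<epsilon>" by simp
qed

lemma l2inner_apply_le_opnorm:
  assumes "T \<in> bdd_ops" "\<xi> \<in> ell2" "\<eta> \<in> ell2"
  shows "cmod (l2inner (T \<xi>) \<eta>) \<le> opnorm T * l2norm \<xi> * l2norm \<eta>"
  using l2inner_Cauchy_Schwarz[OF bdd_ops_ell2[OF assms(1,2)] assms(3)]
    mult_right_mono[OF l2norm_le_opnorm[OF assms(1,2)] l2norm_nonneg[of \<eta>]]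
  by linarith

lemma l2inner_apply_chiF_tendsto:
  assumes T: "T \<in> bdd_ops" and x: "\<xi> \<in> ell2" and e: "\<eta> \<in> ell2"
  shows "((\<lambda>F. l2inner (T (chiF F \<xi>)) \<eta>) \<longlongrightarrow> l2inner (T \<xi>) \<eta>) (finite_subsets_at_top UNIV)"
proof (rule tendstoI)
  fix \<epsilon> :: real assume eps: "\<epsilon> > 0"
  have a: "opnorm T + 1 > 0" and b: "l2norm \<eta> + 1 > 0"
    using opnorm_nonneg[OF T] l2norm_nonneg[of \<eta>] by linarith+
  define K where "K = (opnorm T + 1) * (l2norm \<eta> + 1)"
  have K: "K > 0" unfolding K_def using a b by simp
  obtain F0 where F0: "finite F0" "\<And>F. F0 \<subseteq> F \<Longrightarrow> l2norm (\<lambda>g. \<xi> g - chiF F \<xi> g) \<le> \<epsilon> / (2 * K)"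
    using chiF_approx[OF x, of "\<epsilon> / (2 * K)"] eps K by auto
  have "dist (l2inner (T (chiF F \<xi>)) \<eta>) (l2inner (T \<xi>) \<eta>) < \<epsilon>" if "F0 \<subseteq> F" for F
  proof -
    have d: "(\<lambda>g. \<xi> g - chiF F \<xi> g) \<in> ell2" by (rule ell2_diff[OF x chiF_ell2[OF x]])
    have "l2inner (T \<xi>) \<eta> - l2inner (T (chiF F \<xi>)) \<eta> = l2inner (T (\<lambda>g. \<xi> g - chiF F \<xi> g)) \<eta>"
      using bdd_ops_diff[OF T x chiF_ell2[OF x]]
        l2inner_diff_left[OF bdd_ops_ell2[OF T x] bdd_ops_ell2[OF T chiF_ell2[OF x]] e] by simp
    then have "cmod (l2inner (T \<xi>) \<eta> - l2inner (T (chiF F \<xi>)) \<eta>)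
        \<le> opnorm T * l2norm (\<lambda>g. \<xi> g - chiF F \<xi> g) * l2norm \<eta>"
      using l2inner_apply_le_opnorm[OF T d e] by simp
    also have "\<dots> \<le> (opnorm T + 1) * (\<epsilon> / (2 * K)) * (l2norm \<eta> + 1)"
      using F0(2)[OF that] opnorm_nonneg[OF T] eps K
      by (intro mult_mono) (auto intro: mult_mono)
    also have "\<dots> = K * (\<epsilon> / (2 * K))" unfolding K_def by (simp only: mult_ac)
    also have "\<dots> < \<epsilon>" using eps K by simp
    finally show ?thesis by (simp add: dist_norm norm_minus_commute)
  qed
  then show "eventually (\<lambda>F. dist (l2inner (T (chiF F \<xi>)) \<eta>) (l2inner (T \<xi>) \<eta>) < \<epsilon>)
      (finite_subsets_at_top UNIV)"
    unfolding eventually_finite_subsets_at_top using F0(1) by blast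
qed

lemma le_mult_sqrt_imp_le_power2:
  fixes S c :: real
  assumes "0 \<le> S" "S \<le> c * sqrt S"
  shows "S \<le> c^2"
proof (cases "S = 0")
  case False
  then have pos: "sqrt S > 0" using assms(1) by simp
  have "sqrt S * sqrt S \<le> c * sqrt S" using assms by simp
  then have "sqrt S \<le> c" using pos by (rule mult_right_le_imp_le)
  then have "(sqrt S)^2 \<le> c^2" using pos by (intro power_mono) auto
  then show ?thesis using assms(1) by simp
qed simp

definition adjT :: "'g op \<Rightarrow> 'g op" where
  "adjT T = (\<lambda>\<eta>. if \<eta> \<in> ell2 then (\<lambda>g. cnj (l2inner (T (delta_at g)) \<eta>)) else (\<lambda>_. 0))"

lemma adjT_ell2_l2norm_le:
  assumes T: "T \<in> bdd_ops" and e: "\<eta> \<in> ell2"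
  shows "adjT T \<eta> \<in> ell2 \<and> l2norm (adjT T \<eta>) \<le> opnorm T * l2norm \<eta>"
proof -
  define a where "a g = l2inner (T (delta_at g)) \<eta>" for g
  have eq: "adjT T \<eta> = (\<lambda>g. cnj (a g))" using e by (simp add: adjT_def a_def)
  have "(\<Sum>g\<in>H. (cmod (cnj (a g)))^2) \<le> (opnorm T * l2norm \<eta>)^2" if H: "finite H" for H
  proof -
    define S where "S = (\<Sum>g\<in>H. (cmod (a g))^2)"
    define \<zeta> where "\<zeta> = chiF H (\<lambda>g. cnj (a g))"
    have z: "\<zeta> \<in> ell2" "l2norm \<zeta> = sqrt S"
      using chiF_finite_ell2[OF H, of "\<lambda>g. cnj (a g)"] by (auto simp: \<zeta>_def S_def real_sqrt_unique)
    have "l2inner (T \<zeta>) \<eta> = l2inner (\<lambda>h. \<Sum>g\<in>H. cnj (a g) * T (delta_at g) h) \<eta>"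
      unfolding \<zeta>_def chiF_eq_sum_delta_at[OF H] by (subst bdd_ops_sum[OF T H]) auto
    also have "\<dots> = (\<Sum>g\<in>H. cnj (a g) * a g)"
      by (subst l2inner_sum_left[OF e H]) (auto intro: bdd_ops_ell2[OF T] simp: a_def)
    also have "\<dots> = (\<Sum>g\<in>H. complex_of_real ((cmod (a g))^2))"
      by (intro sum.cong refl) (subst complex_norm_square, simp add: mult.commute)
    also have "\<dots> = complex_of_real S" by (simp only: S_def of_real_sum)
    finally have "l2inner (T \<zeta>) \<eta> = complex_of_real S" .
    moreover have "S \<ge> 0" by (simp add: S_def sum_nonneg)
    ultimately have "S = cmod (l2inner (T \<zeta>) \<eta>)" by simp
    also have "\<dots> \<le> opnorm T * l2norm \<eta> * sqrt S"
      using l2inner_apply_le_opnorm[OF T z(1) e] z(2) by (simp add: mult_ac)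
    finally have "S \<le> (opnorm T * l2norm \<eta>)^2"
      by (rule le_mult_sqrt_imp_le_power2[rotated]) (simp add: S_def sum_nonneg)
    then show ?thesis by (simp add: S_def)
  qed
  moreover have "0 \<le> opnorm T * l2norm \<eta>" using opnorm_nonneg[OF T] by simp
  ultimately show ?thesis unfolding eq by (intro ell2_l2norm_leI)
qed

lemma adjT_bdd_ops:
  assumes T: "T \<in> bdd_ops"
  shows "adjT T \<in> bdd_ops"
proof (rule bdd_opsI[where C="opnorm T"])
  fix \<eta> \<eta>' :: "'a \<Rightarrow> complex" and a b assume e: "\<eta> \<in> ell2" "\<eta>' \<in> ell2"
  then show "adjT T (\<lambda>g. a * \<eta> g + b * \<eta>' g) = (\<lambda>g. a * adjT T \<eta> g + b * adjT T \<eta>' g)"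
    by (simp add: adjT_def ell2_linear l2inner_linear_right[OF e bdd_ops_ell2[OF T delta_at_ell2]])
qed (use adjT_ell2_l2norm_le[OF T] in \<open>auto simp: adjT_def\<close>)

lemma adjT_l2inner:
  assumes T: "T \<in> bdd_ops" and x: "\<xi> \<in> ell2" and e: "\<eta> \<in> ell2"
  shows "l2inner (T \<xi>) \<eta> = l2inner \<xi> (adjT T \<eta>)"
proof -
  define f where "f g = \<xi> g * l2inner (T (delta_at g)) \<eta>" for g
  have r: "l2inner \<xi> (adjT T \<eta>) = infsum f UNIV"
    using e by (simp add: l2inner_def[of \<xi>] adjT_def f_def[abs_def])
  have "f summable_on UNIV"
    using l2inner_summable[OF x bdd_ops_ell2[OF adjT_bdd_ops[OF T] e]] e by (simp add: adjT_def f_def[abs_def])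
  then have lim1: "(sum f \<longlongrightarrow> infsum f UNIV) (finite_subsets_at_top UNIV)"
    by (rule infsum_tendsto)
  have "sum f F = l2inner (T (chiF F \<xi>)) \<eta>" if F: "finite F" for F
  proof -
    have "l2inner (T (chiF F \<xi>)) \<eta> = l2inner (\<lambda>h. \<Sum>g\<in>F. \<xi> g * T (delta_at g) h) \<eta>"
      unfolding chiF_eq_sum_delta_at[OF F] by (subst bdd_ops_sum[OF T F]) auto
    also have "\<dots> = sum f F"
      by (subst l2inner_sum_left[OF e F]) (auto intro: bdd_ops_ell2[OF T] simp: f_def)
    finally show ?thesis by simp
  qed
  then have lim2: "(sum f \<longlongrightarrow> l2inner (T \<xi>) \<eta>) (finite_subsets_at_top UNIV)"
    using l2inner_apply_chiF_tendsto[OF T x e] by (subst tendsto_cong) auto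
  from tendsto_unique[OF finite_subsets_at_top_neq_bot lim1 lim2] r show ?thesis by simp
qed

lemma op_adj_eq_adjT:
  assumes T: "T \<in> bdd_ops"
  shows "op_adj T = adjT T"
  unfolding op_adj_def
proof (rule the_equality)
  show "adjT T \<in> bdd_ops \<and> (\<forall>\<xi>\<in>ell2. \<forall>\<eta>\<in>ell2. l2inner (T \<xi>) \<eta> = l2inner \<xi> (adjT T \<eta>))"
    using adjT_bdd_ops[OF T] adjT_l2inner[OF T] by blast
  fix S assume S: "S \<in> bdd_ops \<and> (\<forall>\<xi>\<in>ell2. \<forall>\<eta>\<in>ell2. l2inner (T \<xi>) \<eta> = l2inner \<xi> (S \<eta>))"
  show "S = adjT T"
  proof
    fix \<eta> :: "'a \<Rightarrow> complex"
    show "S \<eta> = adjT T \<eta>"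
    proof (cases "\<eta> \<in> ell2")
      case e: True
      have "cnj (S \<eta> j) = cnj (adjT T \<eta> j)" for j
      proof -
        have "cnj (S \<eta> j) = l2inner (T (delta_at j)) \<eta>"
          using S e by (simp flip: l2inner_delta_at_left)
        also have "\<dots> = cnj (adjT T \<eta> j)"
          using adjT_l2inner[OF T delta_at_ell2 e] by simp
        finally show ?thesis .
      qed
      then show ?thesis by (simp add: fun_eq_iff)
    next
      case False
      then show ?thesis using S bdd_ops_outside[of S \<eta>] by (simp add: adjT_def)
    qed
  qed
qed

lemma bdd_ops_eqI_delta_at:
  assumes S: "S \<in> bdd_ops" and T: "T \<in> bdd_ops" and eq: "\<And>j. S (delta_at j) = T (delta_at j)"
  shows "S = T"
proof
  fix \<xi> :: "'a \<Rightarrow> complex"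
  show "S \<xi> = T \<xi>"
  proof (cases "\<xi> \<in> ell2")
    case x: True
    have "adjT S (delta_at j) = adjT T (delta_at j)" for j by (simp add: adjT_def eq)
    then have "S \<xi> j = T \<xi> j" for j
      using adjT_l2inner[OF S x delta_at_ell2, of j] adjT_l2inner[OF T x delta_at_ell2, of j] by simp
    then show ?thesis by (simp add: fun_eq_iff)
  next
    case False
    then show ?thesis using bdd_ops_outside[OF S] bdd_ops_outside[OF T] by simp
  qed
qed

lemma op_net_conv_approx:
  assumes "op_net_conv P T" "\<epsilon> > 0"
  obtains F where "finite F" "opnorm (op_minus T (P F)) < \<epsilon>"
  using assms unfolding op_net_conv_def by (metis opnorm_minus_commute order_refl)

lemma op_net_conv_in_norm_closed:
  assumes "T \<in> bdd_ops" "op_net_conv P T" "\<And>F. finite F \<Longrightarrow> P F \<in> A" "norm_closed A"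
  shows "T \<in> A"
proof -
  have "\<exists>S\<in>A. opnorm (op_minus T S) < \<epsilon>" if "\<epsilon> > 0" for \<epsilon>
    using op_net_conv_approx[OF assms(2) that] assms(3) by metis
  with assms(1,4) show ?thesis unfolding norm_closed_def by blast
qed

lemma op_net_conv_in_wot_closed:
  assumes T: "T \<in> bdd_ops" and c: "op_net_conv P T" and PA: "\<And>F. finite F \<Longrightarrow> P F \<in> A"
    and wc: "wot_closed A" and Ab: "A \<subseteq> bdd_ops"
  shows "T \<in> A"
proof -
  have "\<exists>S\<in>A. \<forall>(\<xi>,\<eta>)\<in>Q. cmod (l2inner (T \<xi>) \<eta> - l2inner (S \<xi>) \<eta>) < \<epsilon>"
    if Q: "finite Q" "Q \<subseteq> ell2 \<times> ell2" and eps: "\<epsilon> > 0" for Q \<epsilon>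
  proof -
    define M where "M = (\<Sum>(\<xi>,\<eta>)\<in>Q. l2norm \<xi> * l2norm \<eta>) + 1"
    have M: "l2norm \<xi> * l2norm \<eta> < M" if "(\<xi>,\<eta>) \<in> Q" for \<xi> \<eta>
      using member_le_sum[of "(\<xi>,\<eta>)" Q "\<lambda>(\<xi>,\<eta>). l2norm \<xi> * l2norm \<eta>"] that Q(1)
      by (auto simp: M_def intro: mult_nonneg_nonneg)
    have "M > 0" using M_def sum_nonneg[of Q "\<lambda>(\<xi>,\<eta>). l2norm \<xi> * l2norm \<eta>"]
      by (simp add: case_prod_beta)
    then obtain F where F: "finite F" "opnorm (op_minus T (P F)) < \<epsilon> / M"
      using op_net_conv_approx[OF c, of "\<epsilon> / M"] eps by auto
    have S: "op_minus T (P F) \<in> bdd_ops" using op_minus_bdd_ops[OF T] PA[OF F(1)] Ab by blast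
    have "cmod (l2inner (T \<xi>) \<eta> - l2inner (P F \<xi>) \<eta>) < \<epsilon>" if "(\<xi>,\<eta>) \<in> Q" for \<xi> \<eta>
    proof -
      have x: "\<xi> \<in> ell2" and e: "\<eta> \<in> ell2" using that Q by auto
      have "l2inner (T \<xi>) \<eta> - l2inner (P F \<xi>) \<eta> = l2inner (op_minus T (P F) \<xi>) \<eta>"
        unfolding op_minus_def using PA[OF F(1)] Ab x e
        by (intro l2inner_diff_left[symmetric] bdd_ops_ell2[OF T]) (auto intro: bdd_ops_ell2)
      then have "cmod (l2inner (T \<xi>) \<eta> - l2inner (P F \<xi>) \<eta>)
          \<le> opnorm (op_minus T (P F)) * (l2norm \<xi> * l2norm \<eta>)"
        using l2inner_apply_le_opnorm[OF S x e] by (simp add: mult.assoc)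
      also have "\<dots> \<le> \<epsilon> / M * (l2norm \<xi> * l2norm \<eta>)"
        using F(2) by (intro mult_right_mono) auto
      also have "\<dots> < \<epsilon> / M * M"
        using M[OF that] eps \<open>M > 0\<close> by (intro mult_strict_left_mono) auto
      also have "\<dots> = \<epsilon>" using \<open>M > 0\<close> by simp
      finally show ?thesis .
    qed
    then show ?thesis using PA[OF F(1)] by blast
  qed
  with T wc show ?thesis unfolding wot_closed_def by blast
qed

section \<open>The twisted left regular representation\<close>

lemma cocycle_cmod [simp]: "cocycle \<sigma> \<Longrightarrow> cmod (\<sigma> g h) = 1"
  by (simp add: cocycle_def)

lemma cocycle_assoc: "cocycle \<sigma> \<Longrightarrow> \<sigma> g h * \<sigma> (g + h) k = \<sigma> h k * \<sigma> g (h + k)"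
  by (simp add: cocycle_def)

lemma cocycle_cnj_mult [simp]: "cocycle \<sigma> \<Longrightarrow> cnj (\<sigma> g h) * \<sigma> g h = 1"
  using complex_norm_square[of "\<sigma> g h"] by (simp add: mult.commute)

lemma cocycle_triv: "cocycle triv"
  by (simp add: cocycle_def triv_def)

lemma Lam_apply: "\<xi> \<in> ell2 \<Longrightarrow> Lam \<sigma> g \<xi> = (\<lambda>h. \<sigma> g (- g + h) * \<xi> (- g + h))"
  by (simp add: Lam_def)

lemma ell2_translate_left:
  fixes \<xi> :: "'g::group_add \<Rightarrow> complex"
  shows "((\<lambda>h. \<xi> (- g + h)) \<in> ell2 \<longleftrightarrow> \<xi> \<in> ell2) \<and> l2norm (\<lambda>h. \<xi> (- g + h)) = l2norm \<xi>"
  by (rule ell2_reindex_bij[of _ "\<lambda>x. g + x"]) (simp_all add: add.assoc[symmetric])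

lemma ell2_translate_right:
  fixes \<xi> :: "'g::group_add \<Rightarrow> complex"
  shows "(\<lambda>h. \<xi> (h + k)) \<in> ell2 \<longleftrightarrow> \<xi> \<in> ell2"
  using ell2_reindex_bij[of "\<lambda>h. h + k" "\<lambda>h. h + - k" \<xi>] by (simp add: add.assoc)

lemma ell2_reflect:
  fixes \<eta> :: "'g::group_add \<Rightarrow> complex"
  shows "\<eta> \<in> ell2 \<Longrightarrow> (\<lambda>g. \<eta> (- g + h)) \<in> ell2"
  using ell2_reindex_bij[of "\<lambda>x. - x + h" "\<lambda>x. h + - x" \<eta>]
  by (simp add: minus_add add.assoc[symmetric])

lemma Lam_bdd_ops:
  assumes "cocycle \<sigma>"
  shows "Lam \<sigma> g \<in> bdd_ops"
proof (rule bdd_opsI[where C=1])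
  have "((\<lambda>h. \<sigma> g (- g + h) * \<xi> (- g + h)) \<in> ell2 \<longleftrightarrow> \<xi> \<in> ell2)
     \<and> l2norm (\<lambda>h. \<sigma> g (- g + h) * \<xi> (- g + h)) = l2norm \<xi>" for \<xi>
    using ell2_cmod_cong[of "\<lambda>h. \<sigma> g (- g + h) * \<xi> (- g + h)" "\<lambda>h. \<xi> (- g + h)"]
      ell2_translate_left[of \<xi> g] assms by (simp add: norm_mult)
  then show "\<xi> \<in> ell2 \<Longrightarrow> Lam \<sigma> g \<xi> \<in> ell2" "\<xi> \<in> ell2 \<Longrightarrow> l2norm (Lam \<sigma> g \<xi>) \<le> 1 * l2norm \<xi>"
    for \<xi> by (simp_all add: Lam_apply)
qed (simp_all add: Lam_def ell2_linear distrib_left mult.left_commute)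

lemma psum_bdd_ops: "cocycle \<sigma> \<Longrightarrow> finite F \<Longrightarrow> psum \<sigma> f F \<in> bdd_ops"
  unfolding psum_def by (rule sum_bdd_ops) (auto intro: Lam_bdd_ops)

lemma piS_bdd_ops: "cocycle \<sigma> \<Longrightarrow> f \<in> Kfin \<Longrightarrow> piS \<sigma> f \<in> bdd_ops"
  unfolding piS_def by (rule psum_bdd_ops) (auto simp: Kfin_def)

lemma chiF_Kfin: "finite D \<Longrightarrow> chiF D \<xi> \<in> Kfin"
  unfolding Kfin_def chiF_def by (auto intro: finite_subset[of _ D])

lemma psum_eq_piS_chiF:
  assumes "finite D"
  shows "psum \<sigma> \<xi> D = piS \<sigma> (chiF D \<xi>)"
proof -
  have "{g. chiF D \<xi> g \<noteq> 0} = {g\<in>D. \<xi> g \<noteq> 0}" by (auto simp: chiF_def)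
  then show ?thesis unfolding piS_def psum_def
    by (intro ext sum.mono_neutral_cong_right) (use assms in \<open>auto simp: chiF_def\<close>)
qed

lemma psum_diff:
  "finite F' \<Longrightarrow> F \<subseteq> F' \<Longrightarrow> psum \<sigma> \<xi> F' \<eta> h - psum \<sigma> \<xi> F \<eta> h = psum \<sigma> \<xi> (F' - F) \<eta> h"
  unfolding psum_def by (subst sum.subset_diff[of F F']) auto

lemma psum_in_star_subalg:
  assumes A: "star_subalg A" "range (Lam \<sigma>) \<subseteq> A" and F: "finite F"
  shows "psum \<sigma> f F \<in> A"
  using F
proof (induction F rule: finite_induct)
  case empty
  have "psum \<sigma> f {} = op_smult 0 (Lam \<sigma> 0)" by (simp add: psum_def op_smult_def fun_eq_iff)
  moreover have "Lam \<sigma> 0 \<in> A" using A(2) by blast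
  ultimately show ?case using A(1) unfolding star_subalg_def by auto
next
  case (insert x F)
  have "psum \<sigma> f (insert x F) = op_add (op_smult (f x) (Lam \<sigma> x)) (psum \<sigma> f F)"
    using insert(1,2) by (simp add: psum_def op_smult_def op_add_def fun_eq_iff)
  moreover have "Lam \<sigma> x \<in> A" using A(2) by blast
  ultimately show ?case using A(1) insert(3) unfolding star_subalg_def by auto
qed

definition abs_fun :: "('a \<Rightarrow> complex) \<Rightarrow> 'a \<Rightarrow> complex" where
  "abs_fun f = (\<lambda>g. complex_of_real (cmod (f g)))"

lemma abs_fun_ell2: "abs_fun \<xi> \<in> ell2 \<longleftrightarrow> \<xi> \<in> ell2" and l2norm_abs_fun: "l2norm (abs_fun \<xi>) = l2norm \<xi>"
  using ell2_cmod_cong[of "abs_fun \<xi>" \<xi>] by (simp_all add: abs_fun_def)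

lemma cmod_piS_le_untwisted:
  assumes "cocycle \<sigma>" "\<xi> \<in> ell2"
  shows "cmod (piS \<sigma> f \<xi> h) \<le> cmod (piS triv (abs_fun f) (abs_fun \<xi>) h)"
proof -
  have supp: "{g. abs_fun f g \<noteq> 0} = {g. f g \<noteq> 0}" by (auto simp: abs_fun_def)
  have "cmod (piS \<sigma> f \<xi> h) = cmod (\<Sum>g | f g \<noteq> 0. f g * (\<sigma> g (- g + h) * \<xi> (- g + h)))"
    using assms(2) by (simp add: piS_def psum_def Lam_apply)
  also have "\<dots> \<le> (\<Sum>g | f g \<noteq> 0. cmod (f g) * cmod (\<xi> (- g + h)))"
    by (rule order_trans[OF norm_sum]) (simp add: norm_mult assms(1))
  also have "\<dots> = cmod (piS triv (abs_fun f) (abs_fun \<xi>) h)"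
  proof -
    have "piS triv (abs_fun f) (abs_fun \<xi>) h
        = complex_of_real (\<Sum>g | f g \<noteq> 0. cmod (f g) * cmod (\<xi> (- g + h)))"
      using assms(2) abs_fun_ell2[of \<xi>]
      by (simp add: piS_def psum_def Lam_apply supp triv_def abs_fun_def flip: of_real_mult)
    then show ?thesis by (simp only: norm_of_real) (simp add: sum_nonneg)
  qed
  finally show ?thesis .
qed

lemma opnorm_piS_le_untwisted:
  assumes "cocycle \<sigma>" "f \<in> Kfin"
  shows "opnorm (piS \<sigma> f) \<le> opnorm (piS triv (abs_fun f))"
proof -
  have "abs_fun f \<in> Kfin" using assms(2) by (simp add: Kfin_def abs_fun_def)
  then have T: "piS triv (abs_fun f) \<in> bdd_ops" by (rule piS_bdd_ops[OF cocycle_triv])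
  show ?thesis
  proof (rule opnorm_le[OF opnorm_nonneg[OF T]])
    fix \<xi> :: "'a \<Rightarrow> complex" assume x: "\<xi> \<in> ell2"
    then have ax: "abs_fun \<xi> \<in> ell2" by (simp add: abs_fun_ell2)
    have "l2norm (piS \<sigma> f \<xi>) \<le> 1 * l2norm (piS triv (abs_fun f) (abs_fun \<xi>))"
      using ell2_l2norm_le_pointwise[OF bdd_ops_ell2[OF T ax], of 1 "piS \<sigma> f \<xi>"]
        cmod_piS_le_untwisted[OF assms(1) x] by simp
    also have "\<dots> \<le> opnorm (piS triv (abs_fun f)) * l2norm \<xi>"
      using l2norm_le_opnorm[OF T ax] by (simp add: l2norm_abs_fun)
    finally show "l2norm (piS \<sigma> f \<xi>) \<le> opnorm (piS triv (abs_fun f)) * l2norm \<xi>" by simp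
  qed
qed

lemma pi_bounded_twisted:
  assumes "cocycle \<sigma>" "pi_bounded triv nrm" "\<And>f. nrm (abs_fun f) = nrm f"
  shows "pi_bounded \<sigma> nrm"
proof -
  obtain C where C: "\<And>f. f \<in> Kfin \<Longrightarrow> opnorm (piS triv f) \<le> C * nrm f"
    using assms(2) by (auto simp: pi_bounded_def)
  have "opnorm (piS \<sigma> f) \<le> C * nrm f" if "f \<in> Kfin" for f
    using opnorm_piS_le_untwisted[OF assms(1) that] C[of "abs_fun f"] that assms(3)
    by (simp add: Kfin_def abs_fun_def)
  then show ?thesis by (auto simp: pi_bounded_def)
qed

section \<open>Commutants\<close>

definition adjoint_pair :: "'g op \<Rightarrow> 'g op \<Rightarrow> bool" where
  "adjoint_pair U V \<longleftrightarrow> (\<forall>\<xi>. U \<xi> \<in> ell2 \<longleftrightarrow> \<xi> \<in> ell2)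
     \<and> (\<forall>\<xi> \<eta> a b. U (\<lambda>g. a * \<xi> g + b * \<eta> g) = (\<lambda>h. a * U \<xi> h + b * U \<eta> h))
     \<and> (\<forall>x y. x \<in> ell2 \<longrightarrow> y \<in> ell2 \<longrightarrow> l2inner (U x) y = l2inner x (V y))"

lemma adjoint_pair_ell2: "adjoint_pair U V \<Longrightarrow> U \<xi> \<in> ell2 \<longleftrightarrow> \<xi> \<in> ell2"
  by (simp add: adjoint_pair_def)

lemma adjoint_pair_linear:
  "adjoint_pair U V \<Longrightarrow> U (\<lambda>g. a * \<xi> g + b * \<eta> g) = (\<lambda>h. a * U \<xi> h + b * U \<eta> h)"
  by (simp add: adjoint_pair_def)

lemma adjoint_pair_l2inner:
  "adjoint_pair U V \<Longrightarrow> x \<in> ell2 \<Longrightarrow> y \<in> ell2 \<Longrightarrow> l2inner (U x) y = l2inner x (V y)"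
  by (simp add: adjoint_pair_def)

lemma adjoint_pair_zero: "adjoint_pair U V \<Longrightarrow> U (\<lambda>_. 0) = (\<lambda>_. 0)"
  using adjoint_pair_linear[of U V 0 "\<lambda>_. 0" 0 "\<lambda>_. 0"] by simp

definition commutant :: "('g op \<times> 'g op) set \<Rightarrow> 'g op set" where
  "commutant W = {T \<in> bdd_ops. \<forall>(U,V)\<in>W. T \<circ> U = U \<circ> T}"

lemma commutantD: "T \<in> commutant W \<Longrightarrow> (U,V) \<in> W \<Longrightarrow> T (U \<xi>) = U (T \<xi>)"
  unfolding commutant_def by (auto simp: fun_eq_iff)

lemma commutantI:
  "T \<in> bdd_ops \<Longrightarrow> (\<And>U V \<xi>. (U,V) \<in> W \<Longrightarrow> T (U \<xi>) = U (T \<xi>)) \<Longrightarrow> T \<in> commutant W"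
  unfolding commutant_def by (auto simp: fun_eq_iff)

lemma commutant_bdd_ops: "T \<in> commutant W \<Longrightarrow> T \<in> bdd_ops"
  by (simp add: commutant_def)

lemma l2inner_eq_wot_limit:
  assumes approx: "\<forall>P \<epsilon>. finite P \<and> P \<subseteq> ell2 \<times> ell2 \<and> 0 < \<epsilon> \<longrightarrow>
      (\<exists>S\<in>A. \<forall>(\<xi>, \<eta>)\<in>P. cmod (l2inner (T \<xi>) \<eta> - l2inner (S \<xi>) \<eta>) < \<epsilon>)"
    and ell2: "a \<in> ell2" "b \<in> ell2" "c \<in> ell2" "d \<in> ell2"
    and eq: "\<And>S. S \<in> A \<Longrightarrow> l2inner (S a) b = l2inner (S c) d"
  shows "l2inner (T a) b = l2inner (T c) d"
proof -
  have "cmod (l2inner (T a) b - l2inner (T c) d) \<le> 0 + \<epsilon>" if "\<epsilon> > 0" for \<epsilon>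
  proof -
    obtain S where "S \<in> A"
      and Sa: "cmod (l2inner (T a) b - l2inner (S a) b) < \<epsilon> / 2"
      and Sc: "cmod (l2inner (T c) d - l2inner (S c) d) < \<epsilon> / 2"
      using approx[rule_format, of "{(a, b), (c, d)}" "\<epsilon> / 2"] ell2 \<open>\<epsilon> > 0\<close> by auto
    have "l2inner (T a) b - l2inner (T c) d
        = (l2inner (T a) b - l2inner (S a) b) - (l2inner (T c) d - l2inner (S c) d)"
      using eq[OF \<open>S \<in> A\<close>] by simp
    then have "cmod (l2inner (T a) b - l2inner (T c) d)
        \<le> cmod (l2inner (T a) b - l2inner (S a) b) + cmod (l2inner (T c) d - l2inner (S c) d)"
      by (simp only: norm_triangle_ineq4)
    with Sa Sc show ?thesis by simp
  qed
  then have "cmod (l2inner (T a) b - l2inner (T c) d) \<le> 0" by (rule field_le_epsilon)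
  then show ?thesis by simp
qed

locale adjoint_pairs =
  fixes W :: "('g op \<times> 'g op) set"
  assumes pair_sym: "\<And>U V. (U,V) \<in> W \<Longrightarrow> (V,U) \<in> W"
    and pair_adjoint: "\<And>U V. (U,V) \<in> W \<Longrightarrow> adjoint_pair U V"
begin

lemma adjT_commutant:
  assumes T: "T \<in> commutant W"
  shows "adjT T \<in> commutant W"
proof -
  have Tb: "T \<in> bdd_ops" by (rule commutant_bdd_ops[OF T])
  have A: "adjT T \<in> bdd_ops" by (rule adjT_bdd_ops[OF Tb])
  show ?thesis
  proof (rule commutantI[OF A])
    fix U V \<eta> assume UV: "(U,V) \<in> W"
    have uU: "adjoint_pair U V" and uV: "adjoint_pair V U" using UV pair_sym pair_adjoint by auto
    show "adjT T (U \<eta>) = U (adjT T \<eta>)"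
    proof (cases "\<eta> \<in> ell2")
      case e: True
      have "cnj (adjT T (U \<eta>) j) = cnj (U (adjT T \<eta>) j)" for j
      proof -
        have Vd: "V (delta_at j) \<in> ell2" using adjoint_pair_ell2[OF uV] by simp
        have Ue: "U \<eta> \<in> ell2" using e adjoint_pair_ell2[OF uU] by simp
        have "cnj (adjT T (U \<eta>) j) = l2inner (T (delta_at j)) (U \<eta>)"
          using adjT_l2inner[OF Tb delta_at_ell2 Ue] by simp
        also have "\<dots> = l2inner (T (V (delta_at j))) \<eta>"
          using adjoint_pair_l2inner[OF uV bdd_ops_ell2[OF Tb delta_at_ell2] e]
            commutantD[OF T pair_sym[OF UV]] by simp
        also have "\<dots> = l2inner (delta_at j) (U (adjT T \<eta>))"
          using adjT_l2inner[OF Tb Vd e] adjoint_pair_l2inner[OF uV delta_at_ell2 bdd_ops_ell2[OF A e]]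
          by simp
        finally show ?thesis by simp
      qed
      then show ?thesis by (simp add: fun_eq_iff)
    next
      case False
      then have "U \<eta> \<notin> ell2" using adjoint_pair_ell2[OF uU] by simp
      then show ?thesis using False bdd_ops_outside[OF A] adjoint_pair_zero[OF uU] by simp
    qed
  qed
qed

lemma commutant_star_subalg: "star_subalg (commutant W)"
  unfolding star_subalg_def
proof (intro conjI ballI allI)
  fix S T assume S: "S \<in> commutant W" and T: "T \<in> commutant W"
  show "op_add S T \<in> commutant W"
  proof (rule commutantI[OF op_add_bdd_ops[OF commutant_bdd_ops[OF S] commutant_bdd_ops[OF T]]])
    fix U V \<xi> assume UV: "(U,V) \<in> W"
    show "op_add S T (U \<xi>) = U (op_add S T \<xi>)"
      unfolding op_add_def using commutantD[OF S UV] commutantD[OF T UV]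
        adjoint_pair_linear[OF pair_adjoint[OF UV], of 1 "S \<xi>" 1 "T \<xi>"] by simp
  qed
  show "S \<circ> T \<in> commutant W"
    using commutantD[OF S] commutantD[OF T]
    by (intro commutantI comp_bdd_ops commutant_bdd_ops[OF S] commutant_bdd_ops[OF T]) simp
next
  fix c T assume T: "T \<in> commutant W"
  show "op_smult c T \<in> commutant W"
  proof (rule commutantI[OF op_smult_bdd_ops[OF commutant_bdd_ops[OF T]]])
    fix U V \<xi> assume UV: "(U,V) \<in> W"
    show "op_smult c T (U \<xi>) = U (op_smult c T \<xi>)"
      unfolding op_smult_def using commutantD[OF T UV]
        adjoint_pair_linear[OF pair_adjoint[OF UV], of c "T \<xi>" 0 "T \<xi>"] by simp
  qed
next
  fix T assume T: "T \<in> commutant W"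
  show "op_adj T \<in> commutant W"
    using adjT_commutant[OF T] op_adj_eq_adjT[OF commutant_bdd_ops[OF T]] by simp
qed (auto simp: commutant_def)

lemma commutant_wot_closed: "wot_closed (commutant W)"
  unfolding wot_closed_def
proof (intro ballI impI)
  fix T :: "'g op" assume Tb: "T \<in> bdd_ops"
  assume approx: "\<forall>P \<epsilon>. finite P \<and> P \<subseteq> ell2 \<times> ell2 \<and> 0 < \<epsilon> \<longrightarrow>
      (\<exists>S\<in>commutant W. \<forall>(\<xi>, \<eta>)\<in>P. cmod (l2inner (T \<xi>) \<eta> - l2inner (S \<xi>) \<eta>) < \<epsilon>)"
  show "T \<in> commutant W"
  proof (rule commutantI[OF Tb])
    fix U V \<xi> assume UV: "(U,V) \<in> W"
    have uU: "adjoint_pair U V" and uV: "adjoint_pair V U" using UV pair_sym pair_adjoint by auto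
    show "T (U \<xi>) = U (T \<xi>)"
    proof (cases "\<xi> \<in> ell2")
      case x: True
      have "l2inner (T (U \<xi>)) (delta_at j) = l2inner (U (T \<xi>)) (delta_at j)" for j
      proof -
        have ell2: "U \<xi> \<in> ell2" "V (delta_at j) \<in> ell2"
          using x adjoint_pair_ell2[OF uU] adjoint_pair_ell2[OF uV] by auto
        have "l2inner (S (U \<xi>)) (delta_at j) = l2inner (S \<xi>) (V (delta_at j))"
          if "S \<in> commutant W" for S
          using commutantD[OF that UV] adjoint_pair_l2inner[OF uU bdd_ops_ell2[OF _ x] delta_at_ell2]
            commutant_bdd_ops[OF that] by simp
        then have "l2inner (T (U \<xi>)) (delta_at j) = l2inner (T \<xi>) (V (delta_at j))"
          by (intro l2inner_eq_wot_limit[OF approx ell2(1) delta_at_ell2 x ell2(2)])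
        then show ?thesis using adjoint_pair_l2inner[OF uU bdd_ops_ell2[OF Tb x] delta_at_ell2] by simp
      qed
      then show ?thesis by (simp add: fun_eq_iff)
    next
      case False
      then have "U \<xi> \<notin> ell2" using adjoint_pair_ell2[OF uU] by simp
      then show ?thesis using False bdd_ops_outside[OF Tb] adjoint_pair_zero[OF uU] by simp
    qed
  qed
qed

end

definition wshift :: "('g::group_add \<Rightarrow> complex) \<Rightarrow> 'g \<Rightarrow> 'g op" where
  "wshift w k = (\<lambda>\<xi> h. w h * \<xi> (h + k))"

lemma wshift_adjoint_pair:
  fixes w :: "'g::group_add \<Rightarrow> complex"
  assumes "\<And>h. cmod (w h) = 1"
  shows "adjoint_pair (wshift w k) (wshift (\<lambda>h. cnj (w (h + - k))) (- k))"
  unfolding adjoint_pair_def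
proof (intro conjI allI impI)
  fix \<xi> :: "'g \<Rightarrow> complex"
  show "wshift w k \<xi> \<in> ell2 \<longleftrightarrow> \<xi> \<in> ell2"
    using ell2_cmod_cong[of "wshift w k \<xi>" "\<lambda>h. \<xi> (h + k)"] ell2_translate_right[of \<xi> k] assms
    by (simp add: wshift_def norm_mult)
next
  fix x y :: "'g \<Rightarrow> complex"
  show "l2inner (wshift w k x) y = l2inner x (wshift (\<lambda>h. cnj (w (h + - k))) (- k) y)"
    unfolding l2inner_def wshift_def
    by (rule infsum_reindex_bij_witness[of UNIV "\<lambda>b. b + - k" "\<lambda>a. a + k"]) (simp_all add: add.assoc)
qed (simp add: wshift_def fun_eq_iff algebra_simps)

definition rho :: "('g::group_add \<Rightarrow> 'g \<Rightarrow> complex) \<Rightarrow> 'g \<Rightarrow> 'g op" where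
  "rho \<sigma> k = wshift (\<lambda>h. cnj (\<sigma> h k)) k"

definition rho_adj :: "('g::group_add \<Rightarrow> 'g \<Rightarrow> complex) \<Rightarrow> 'g \<Rightarrow> 'g op" where
  "rho_adj \<sigma> k = wshift (\<lambda>h. \<sigma> (h + - k) k) (- k)"

definition rho_pairs :: "('g::group_add \<Rightarrow> 'g \<Rightarrow> complex) \<Rightarrow> ('g op \<times> 'g op) set" where
  "rho_pairs \<sigma> = range (\<lambda>k. (rho \<sigma> k, rho_adj \<sigma> k)) \<union> range (\<lambda>k. (rho_adj \<sigma> k, rho \<sigma> k))"

lemma adjoint_pair_rho: "cocycle \<sigma> \<Longrightarrow> adjoint_pair (rho \<sigma> k) (rho_adj \<sigma> k)"
  using wshift_adjoint_pair[of "\<lambda>h. cnj (\<sigma> h k)" k] by (simp add: rho_def rho_adj_def)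

lemma adjoint_pair_rho_adj: "cocycle \<sigma> \<Longrightarrow> adjoint_pair (rho_adj \<sigma> k) (rho \<sigma> k)"
  using wshift_adjoint_pair[of "\<lambda>h. \<sigma> (h + - k) k" "- k"] by (simp add: rho_def rho_adj_def add.assoc)

lemma adjoint_pairs_rho_pairs: "cocycle \<sigma> \<Longrightarrow> adjoint_pairs (rho_pairs \<sigma>)"
  by unfold_locales (auto simp: rho_pairs_def adjoint_pair_rho adjoint_pair_rho_adj)

lemma rho_rho_adj:
  assumes "cocycle \<sigma>"
  shows "rho \<sigma> k (rho_adj \<sigma> k \<xi>) = \<xi>"
proof
  fix h
  have "rho \<sigma> k (rho_adj \<sigma> k \<xi>) h = (cnj (\<sigma> h k) * \<sigma> h k) * \<xi> h"
    by (simp add: rho_def rho_adj_def wshift_def add.assoc mult.assoc)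
  then show "rho \<sigma> k (rho_adj \<sigma> k \<xi>) h = \<xi> h" using assms by simp
qed

lemma rho_adj_rho:
  assumes "cocycle \<sigma>"
  shows "rho_adj \<sigma> k (rho \<sigma> k \<xi>) = \<xi>"
proof
  fix h
  have "rho_adj \<sigma> k (rho \<sigma> k \<xi>) h = (cnj (\<sigma> (h + - k) k) * \<sigma> (h + - k) k) * \<xi> h"
    by (simp add: rho_def rho_adj_def wshift_def add.assoc mult_ac)
  then show "rho_adj \<sigma> k (rho \<sigma> k \<xi>) h = \<xi> h" using assms by simp
qed

lemma Lam_rho_adj:
  assumes s: "cocycle \<sigma>"
  shows "Lam \<sigma> g (rho_adj \<sigma> k \<xi>) = rho_adj \<sigma> k (Lam \<sigma> g \<xi>)"
proof (cases "\<xi> \<in> ell2")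
  case x: True
  then have rx: "rho_adj \<sigma> k \<xi> \<in> ell2" using adjoint_pair_ell2[OF adjoint_pair_rho_adj[OF s]] by simp
  show ?thesis
  proof
    fix h
    define b where "b = - g + (h - k)"
    have b: "- g + h - k = b" by (simp add: b_def add_diff_eq)
    have gb: "g + b = h - k" by (simp add: b_def add.assoc[symmetric])
    have bk: "b + k = - g + h" by (simp add: b_def add.assoc)
    have "Lam \<sigma> g (rho_adj \<sigma> k \<xi>) h = \<sigma> g (b + k) * \<sigma> b k * \<xi> b"
      using rx by (simp add: Lam_apply rho_adj_def wshift_def b bk mult.assoc)
    also have "\<dots> = \<sigma> (g + b) k * \<sigma> g b * \<xi> b"
      using cocycle_assoc[OF s, of g b k] by (simp add: mult_ac)
    also have "\<dots> = rho_adj \<sigma> k (Lam \<sigma> g \<xi>) h"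
      using x by (simp add: Lam_apply rho_adj_def wshift_def gb b add_diff_eq mult.assoc)
    finally show "Lam \<sigma> g (rho_adj \<sigma> k \<xi>) h = rho_adj \<sigma> k (Lam \<sigma> g \<xi>) h" .
  qed
next
  case False
  then have "rho_adj \<sigma> k \<xi> \<notin> ell2" using adjoint_pair_ell2[OF adjoint_pair_rho_adj[OF s]] by simp
  then show ?thesis using False by (simp add: Lam_def rho_adj_def wshift_def)
qed

lemma Lam_rho:
  assumes "cocycle \<sigma>"
  shows "Lam \<sigma> g (rho \<sigma> k \<xi>) = rho \<sigma> k (Lam \<sigma> g \<xi>)"
proof -
  have "rho \<sigma> k (Lam \<sigma> g \<xi>) = rho \<sigma> k (Lam \<sigma> g (rho_adj \<sigma> k (rho \<sigma> k \<xi>)))"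
    by (simp only: rho_adj_rho[OF assms])
  also have "\<dots> = Lam \<sigma> g (rho \<sigma> k \<xi>)"
    by (simp only: Lam_rho_adj[OF assms] rho_rho_adj[OF assms])
  finally show ?thesis by simp
qed

lemma Lam_commutant_rho_pairs: "cocycle \<sigma> \<Longrightarrow> Lam \<sigma> g \<in> commutant (rho_pairs \<sigma>)"
  by (rule commutantI[OF Lam_bdd_ops]) (auto simp: rho_pairs_def Lam_rho Lam_rho_adj)

lemma vN_subset_commutant: "cocycle \<sigma> \<Longrightarrow> vN \<sigma> \<subseteq> commutant (rho_pairs \<sigma>)"
  unfolding vN_def
  by (rule Inter_lower) (simp add: adjoint_pairs.commutant_star_subalg adjoint_pairs_rho_pairs
      adjoint_pairs.commutant_wot_closed image_subset_iff Lam_commutant_rho_pairs)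

lemma rho_delta_e: "rho \<sigma> (- j) delta_e = (\<lambda>h. cnj (\<sigma> j (- j)) * delta_at j h)"
  by (auto simp: rho_def wshift_def delta_e_def delta_at_def fun_eq_iff)

text \<open>Commuting with \<open>\<rho>\<^sub>\<sigma>\<close> determines \<open>x\<close> from \<open>x \<delta>\<^sub>e\<close>: the vector \<open>\<rho>\<^sub>\<sigma>(j\<^sup>-\<^sup>1) \<delta>\<^sub>e\<close> is a
  unimodular multiple of \<open>\<delta>\<^sub>j\<close>.\<close>

lemma vN_eqI_hat:
  assumes s: "cocycle \<sigma>" and x: "x \<in> vN \<sigma>" and T: "T \<in> vN \<sigma>" and h: "hat x = hat T"
  shows "x = T"
proof -
  have xC: "x \<in> commutant (rho_pairs \<sigma>)" and TC: "T \<in> commutant (rho_pairs \<sigma>)"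
    using vN_subset_commutant[OF s] x T by auto
  have xb: "x \<in> bdd_ops" and Tb: "T \<in> bdd_ops" using commutant_bdd_ops xC TC by auto
  show ?thesis
  proof (rule bdd_ops_eqI_delta_at[OF xb Tb])
    fix j :: 'a
    define c where "c = cnj (\<sigma> j (- j))"
    have c: "c \<noteq> 0" using cocycle_cmod[OF s, of j "- j"] by (auto simp: c_def)
    have UV: "(rho \<sigma> (- j), rho_adj \<sigma> (- j)) \<in> rho_pairs \<sigma>" by (auto simp: rho_pairs_def)
    have "x (rho \<sigma> (- j) delta_e) = T (rho \<sigma> (- j) delta_e)"
      using commutantD[OF xC UV] commutantD[OF TC UV] h by (simp add: hat_def)
    then have "(\<lambda>h. c * x (delta_at j) h) = (\<lambda>h. c * T (delta_at j) h)"
      unfolding rho_delta_e c_def[symmetric]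
      by (simp add: bdd_ops_scale[OF xb delta_at_ell2] bdd_ops_scale[OF Tb delta_at_ell2])
    then show "x (delta_at j) = T (delta_at j)" using c by (simp add: fun_eq_iff)
  qed
qed

section \<open>Norm convergence of Fourier series\<close>

definition series_op :: "('g::group_add \<Rightarrow> 'g \<Rightarrow> complex) \<Rightarrow> ('g \<Rightarrow> complex) \<Rightarrow> 'g op" where
  "series_op \<sigma> \<xi> = (\<lambda>\<eta>. if \<eta> \<in> ell2 then (\<lambda>h. \<Sum>\<^sub>\<infinity>g. \<xi> g * Lam \<sigma> g \<eta> h) else (\<lambda>_. 0))"

lemma series_op_abs_summable:
  assumes "cocycle \<sigma>" "\<xi> \<in> ell2" "\<eta> \<in> ell2"
  shows "(\<lambda>g. cmod (\<xi> g * Lam \<sigma> g \<eta> h)) summable_on UNIV"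
proof -
  have "(\<lambda>g. cnj (\<eta> (- g + h))) \<in> ell2"
    using ell2_reflect[OF assms(3)] ell2_cmod_cong[of "\<lambda>g. cnj (\<eta> (- g + h))" "\<lambda>g. \<eta> (- g + h)"]
    by simp
  from l2inner_abs_summable(1)[OF assms(2) this] show ?thesis
    using assms by (simp add: Lam_apply norm_mult)
qed

lemma psum_tendsto_series_op:
  assumes "cocycle \<sigma>" "\<xi> \<in> ell2" "\<eta> \<in> ell2"
  shows "((\<lambda>F. psum \<sigma> \<xi> F \<eta> h) \<longlongrightarrow> series_op \<sigma> \<xi> \<eta> h) (finite_subsets_at_top UNIV)"
  using infsum_tendsto[OF abs_summable_summable[OF series_op_abs_summable[OF assms]]] assms(3)
  by (simp add: psum_def series_op_def)

lemma series_op_linear: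
  assumes s: "cocycle \<sigma>" and x: "\<xi> \<in> ell2" and e: "\<eta> \<in> ell2" "\<eta>' \<in> ell2"
  shows "series_op \<sigma> \<xi> (\<lambda>g. a * \<eta> g + b * \<eta>' g) = (\<lambda>h. a * series_op \<sigma> \<xi> \<eta> h + b * series_op \<sigma> \<xi> \<eta>' h)"
proof
  fix h
  have summable: "(\<lambda>g. \<xi> g * Lam \<sigma> g \<zeta> h) summable_on UNIV" if "\<zeta> \<in> ell2" for \<zeta>
    by (rule abs_summable_summable[OF series_op_abs_summable[OF s x that]])
  have "Lam \<sigma> g (\<lambda>g. a * \<eta> g + b * \<eta>' g) h = a * Lam \<sigma> g \<eta> h + b * Lam \<sigma> g \<eta>' h" for g
    using bdd_ops_linear[OF Lam_bdd_ops[OF s] e, of g a b] by (simp add: fun_eq_iff)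
  then have "series_op \<sigma> \<xi> (\<lambda>g. a * \<eta> g + b * \<eta>' g) h
      = (\<Sum>\<^sub>\<infinity>g. a * (\<xi> g * Lam \<sigma> g \<eta> h) + b * (\<xi> g * Lam \<sigma> g \<eta>' h))"
    using ell2_linear[OF e] by (simp add: series_op_def algebra_simps)
  also have "\<dots> = a * series_op \<sigma> \<xi> \<eta> h + b * series_op \<sigma> \<xi> \<eta>' h"
    using e summable[OF e(1)] summable[OF e(2)]
    by (simp add: infsum_add summable_on_cmult_right infsum_cmult_right' series_op_def)
  finally show "series_op \<sigma> \<xi> (\<lambda>g. a * \<eta> g + b * \<eta>' g) h = a * series_op \<sigma> \<xi> \<eta> h + b * series_op \<sigma> \<xi> \<eta>' h" .
qed

lemma hat_series_op:
  assumes "cocycle \<sigma>"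
  shows "hat (series_op \<sigma> \<xi>) = \<xi>"
proof
  fix h
  have "Lam \<sigma> g delta_e h = \<sigma> g (- g + h) * delta_at 0 (- g + h)" for g
    by (simp add: Lam_apply delta_e_eq)
  then have "Lam \<sigma> g delta_e h = (if g = h then 1 else 0)" for g
    using assms by (auto simp: delta_at_def cocycle_def add_eq_0_iff)
  then have "((\<lambda>g. \<xi> g * Lam \<sigma> g delta_e h) has_sum \<xi> h) UNIV"
    by (intro has_sum_finite_neutralI[of "{h}"]) auto
  then show "hat (series_op \<sigma> \<xi>) h = \<xi> h"
    by (simp add: hat_def series_op_def delta_e_eq infsumI)
qed

lemma op_net_conv_psum_in_Cr:
  assumes "cocycle \<sigma>" "T \<in> bdd_ops" "op_net_conv (psum \<sigma> \<xi>) T"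
  shows "T \<in> Cr \<sigma>"
  unfolding Cr_def
proof (rule InterI)
  fix A assume "A \<in> {A. star_subalg A \<and> norm_closed A \<and> range (Lam \<sigma>) \<subseteq> A}"
  then have A: "star_subalg A" "norm_closed A" "range (Lam \<sigma>) \<subseteq> A" by auto
  show "T \<in> A" by (rule op_net_conv_in_norm_closed[OF assms(2,3) psum_in_star_subalg[OF A(1,3)] A(2)])
qed

lemma op_net_conv_psum_in_vN:
  assumes "cocycle \<sigma>" "T \<in> bdd_ops" "op_net_conv (psum \<sigma> \<xi>) T"
  shows "T \<in> vN \<sigma>"
  unfolding vN_def
proof (rule InterI)
  fix A assume "A \<in> {A. star_subalg A \<and> wot_closed A \<and> range (Lam \<sigma>) \<subseteq> A}"
  then have A: "star_subalg A" "wot_closed A" "range (Lam \<sigma>) \<subseteq> A" by auto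
  moreover have "A \<subseteq> bdd_ops" using A(1) by (simp add: star_subalg_def)
  ultimately show "T \<in> A"
    by (intro op_net_conv_in_wot_closed[OF assms(2,3) psum_in_star_subalg]) auto
qed

locale decay_property =
  fixes \<sigma> :: "'g::group_add \<Rightarrow> 'g \<Rightarrow> complex" and L :: "('g \<Rightarrow> complex) set"
    and nrm :: "('g \<Rightarrow> complex) \<Rightarrow> real"
  assumes cocycle: "cocycle \<sigma>" and decay: "decay_prop \<sigma> L nrm"
    and L_subset_ell2: "L \<subseteq> ell2" and nrm_nonneg: "\<And>f. nrm f \<ge> 0"
begin

lemma pi_bound_pos:
  obtains C where "C > 0" "\<And>f. f \<in> Kfin \<Longrightarrow> opnorm (piS \<sigma> f) \<le> C * nrm f"
proof -
  obtain C where C: "\<And>f. f \<in> Kfin \<Longrightarrow> opnorm (piS \<sigma> f) \<le> C * nrm f"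
    using decay by (auto simp: decay_prop_def pi_bounded_def)
  have "C * nrm f \<le> (\<bar>C\<bar> + 1) * nrm f" for f
    using nrm_nonneg[of f] by (intro mult_right_mono) auto
  with C show thesis by (intro that[of "\<bar>C\<bar> + 1"]) (auto intro: order_trans)
qed

lemma psum_tail_small:
  assumes x: "\<xi> \<in> L" and eps: "\<epsilon> > 0"
  shows "\<exists>F0. finite F0 \<and> (\<forall>D. finite D \<and> D \<inter> F0 = {} \<longrightarrow> opnorm (psum \<sigma> \<xi> D) \<le> \<epsilon>)"
proof -
  obtain C where C: "C > 0" "\<And>f. f \<in> Kfin \<Longrightarrow> opnorm (piS \<sigma> f) \<le> C * nrm f"
    using pi_bound_pos by blast
  obtain F0 where F0: "finite F0" "\<And>D. finite D \<and> D \<inter> F0 = {} \<longrightarrow> nrm (chiF D \<xi>) < \<epsilon> / C"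
    using decay x eps C(1) unfolding decay_prop_def by (meson divide_pos_pos)
  have "opnorm (psum \<sigma> \<xi> D) \<le> \<epsilon>" if D: "finite D" "D \<inter> F0 = {}" for D
  proof -
    have "opnorm (psum \<sigma> \<xi> D) \<le> C * nrm (chiF D \<xi>)"
      unfolding psum_eq_piS_chiF[OF D(1)] by (rule C(2)[OF chiF_Kfin[OF D(1)]])
    also have "\<dots> \<le> \<epsilon>"
      using F0(2)[of D] D C(1) by (simp add: pos_less_divide_eq mult.commute)
    finally show ?thesis .
  qed
  with F0(1) show ?thesis by blast
qed

lemma series_op_uniform_approx:
  assumes x: "\<xi> \<in> L" and eps: "\<epsilon> > 0"
  shows "\<exists>F0. finite F0 \<and> (\<forall>F \<eta>. finite F \<and> F0 \<subseteq> F \<and> \<eta> \<in> ell2 \<longrightarrow>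
    (\<lambda>h. series_op \<sigma> \<xi> \<eta> h - psum \<sigma> \<xi> F \<eta> h) \<in> ell2
    \<and> l2norm (\<lambda>h. series_op \<sigma> \<xi> \<eta> h - psum \<sigma> \<xi> F \<eta> h) \<le> \<epsilon> * l2norm \<eta>)"
proof -
  obtain F0 where F0: "finite F0"
    and tail: "\<And>D. finite D \<and> D \<inter> F0 = {} \<longrightarrow> opnorm (psum \<sigma> \<xi> D) \<le> \<epsilon>"
    using psum_tail_small[OF x eps] by blast
  show ?thesis
  proof (intro exI[of _ F0] conjI[OF F0] allI impI, elim conjE)
    fix F and \<eta> :: "'g \<Rightarrow> complex" assume F: "finite F" "F0 \<subseteq> F" and e: "\<eta> \<in> ell2"
    have small: "psum \<sigma> \<xi> (Y - F) \<eta> \<in> ell2 \<and> l2norm (psum \<sigma> \<xi> (Y - F) \<eta>) \<le> \<epsilon> * l2norm \<eta>"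
      if "finite Y" for Y
    proof -
      have P: "psum \<sigma> \<xi> (Y - F) \<in> bdd_ops" using psum_bdd_ops[OF cocycle] that by simp
      have "opnorm (psum \<sigma> \<xi> (Y - F)) \<le> \<epsilon>" using tail[of "Y - F"] F that by blast
      from mult_right_mono[OF this l2norm_nonneg[of \<eta>]]
      have "l2norm (psum \<sigma> \<xi> (Y - F) \<eta>) \<le> \<epsilon> * l2norm \<eta>"
        using l2norm_le_opnorm[OF P e] by linarith
      with bdd_ops_ell2[OF P e] show ?thesis ..
    qed
    show "(\<lambda>h. series_op \<sigma> \<xi> \<eta> h - psum \<sigma> \<xi> F \<eta> h) \<in> ell2
      \<and> l2norm (\<lambda>h. series_op \<sigma> \<xi> \<eta> h - psum \<sigma> \<xi> F \<eta> h) \<le> \<epsilon> * l2norm \<eta>"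
    proof (rule ell2_l2norm_le_pointwise_limit[where F = "finite_subsets_at_top UNIV"])
      have "\<xi> \<in> ell2" using x L_subset_ell2 by blast
      then show "((\<lambda>Y. psum \<sigma> \<xi> Y \<eta> h - psum \<sigma> \<xi> F \<eta> h) \<longlongrightarrow> series_op \<sigma> \<xi> \<eta> h - psum \<sigma> \<xi> F \<eta> h)
          (finite_subsets_at_top UNIV)" for h
        by (intro tendsto_diff tendsto_const psum_tendsto_series_op cocycle e)
      show "eventually (\<lambda>Y. (\<lambda>h. psum \<sigma> \<xi> Y \<eta> h - psum \<sigma> \<xi> F \<eta> h) \<in> ell2
          \<and> l2norm (\<lambda>h. psum \<sigma> \<xi> Y \<eta> h - psum \<sigma> \<xi> F \<eta> h) \<le> \<epsilon> * l2norm \<eta>) (finite_subsets_at_top UNIV)"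
        unfolding eventually_finite_subsets_at_top
        using F small psum_diff[of _ F \<sigma> \<xi> \<eta>] by (intro exI[of _ F]) auto
    qed (use eps in auto)
  qed
qed

lemma series_op_bdd_ops:
  assumes x: "\<xi> \<in> L"
  shows "series_op \<sigma> \<xi> \<in> bdd_ops"
proof -
  obtain F0 where F0: "finite F0" and approx: "\<forall>F \<eta>. finite F \<and> F0 \<subseteq> F \<and> \<eta> \<in> ell2 \<longrightarrow>
      (\<lambda>h. series_op \<sigma> \<xi> \<eta> h - psum \<sigma> \<xi> F \<eta> h) \<in> ell2
      \<and> l2norm (\<lambda>h. series_op \<sigma> \<xi> \<eta> h - psum \<sigma> \<xi> F \<eta> h) \<le> 1 * l2norm \<eta>"
    using series_op_uniform_approx[OF x, of 1] by auto
  have P: "psum \<sigma> \<xi> F0 \<in> bdd_ops" by (rule psum_bdd_ops[OF cocycle F0])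
  show ?thesis
  proof (rule bdd_opsI[where C = "opnorm (psum \<sigma> \<xi> F0) + 1"])
    fix \<eta> :: "'g \<Rightarrow> complex" assume e: "\<eta> \<in> ell2"
    define D where "D = (\<lambda>h. series_op \<sigma> \<xi> \<eta> h - psum \<sigma> \<xi> F0 \<eta> h)"
    have D: "D \<in> ell2" "l2norm D \<le> l2norm \<eta>" using approx[rule_format, OF conjI[OF F0 conjI[OF order_refl e]]]
      by (auto simp: D_def)
    have eq: "series_op \<sigma> \<xi> \<eta> = (\<lambda>h. psum \<sigma> \<xi> F0 \<eta> h + D h)" by (simp add: D_def)
    show "series_op \<sigma> \<xi> \<eta> \<in> ell2" unfolding eq by (rule ell2_add[OF bdd_ops_ell2[OF P e] D(1)])
    have "l2norm (series_op \<sigma> \<xi> \<eta>) \<le> l2norm (psum \<sigma> \<xi> F0 \<eta>) + l2norm D"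
      unfolding eq by (rule l2norm_add_le[OF bdd_ops_ell2[OF P e] D(1)])
    also have "\<dots> \<le> opnorm (psum \<sigma> \<xi> F0) * l2norm \<eta> + l2norm \<eta>"
      using l2norm_le_opnorm[OF P e] D(2) by simp
    finally show "l2norm (series_op \<sigma> \<xi> \<eta>) \<le> (opnorm (psum \<sigma> \<xi> F0) + 1) * l2norm \<eta>"
      by (simp add: algebra_simps)
  next
    fix \<eta> \<eta>' :: "'g \<Rightarrow> complex" and a b assume "\<eta> \<in> ell2" "\<eta>' \<in> ell2"
    then show "series_op \<sigma> \<xi> (\<lambda>g. a * \<eta> g + b * \<eta>' g)
        = (\<lambda>g. a * series_op \<sigma> \<xi> \<eta> g + b * series_op \<sigma> \<xi> \<eta>' g)"
      using series_op_linear[OF cocycle] x L_subset_ell2 by blast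
  next
    fix \<eta> :: "'g \<Rightarrow> complex" assume "\<eta> \<notin> ell2"
    then show "series_op \<sigma> \<xi> \<eta> = (\<lambda>_. 0)" by (simp add: series_op_def)
  qed
qed

lemma op_net_conv_series_op:
  assumes x: "\<xi> \<in> L"
  shows "op_net_conv (psum \<sigma> \<xi>) (series_op \<sigma> \<xi>)"
  unfolding op_net_conv_def
proof (intro allI impI)
  fix \<epsilon> :: real assume "\<epsilon> > 0"
  then have "\<epsilon> / 2 > 0" by simp
  then obtain F0 where F0: "finite F0" and approx: "\<forall>F \<eta>. finite F \<and> F0 \<subseteq> F \<and> \<eta> \<in> ell2 \<longrightarrow>
      (\<lambda>h. series_op \<sigma> \<xi> \<eta> h - psum \<sigma> \<xi> F \<eta> h) \<in> ell2
      \<and> l2norm (\<lambda>h. series_op \<sigma> \<xi> \<eta> h - psum \<sigma> \<xi> F \<eta> h) \<le> \<epsilon> / 2 * l2norm \<eta>"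
    using series_op_uniform_approx[OF x] by blast
  have "opnorm (op_minus (psum \<sigma> \<xi> F) (series_op \<sigma> \<xi>)) < \<epsilon>" if "finite F" "F0 \<subseteq> F" for F
  proof -
    have "opnorm (op_minus (psum \<sigma> \<xi> F) (series_op \<sigma> \<xi>)) \<le> \<epsilon> / 2"
      using approx that \<open>\<epsilon> / 2 > 0\<close>
      by (intro opnorm_le) (auto simp: op_minus_def l2norm_minus_commute[of "psum \<sigma> \<xi> F _"])
    with \<open>\<epsilon> > 0\<close> show ?thesis by simp
  qed
  with F0 show "\<exists>F0. finite F0 \<and> (\<forall>F. finite F \<and> F0 \<subseteq> F \<longrightarrow>
      opnorm (op_minus (psum \<sigma> \<xi> F) (series_op \<sigma> \<xi>)) < \<epsilon>)" by blast
qed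

lemma tpi_eq_series_op:
  assumes "\<xi> \<in> L"
  shows "tpi \<sigma> \<xi> = series_op \<sigma> \<xi>"
  unfolding tpi_def
proof (rule the_equality)
  show "series_op \<sigma> \<xi> \<in> bdd_ops \<and> op_net_conv (psum \<sigma> \<xi>) (series_op \<sigma> \<xi>)"
    using series_op_bdd_ops[OF assms] op_net_conv_series_op[OF assms] ..
  show "T = series_op \<sigma> \<xi>" if "T \<in> bdd_ops \<and> op_net_conv (psum \<sigma> \<xi>) T" for T
    using that series_op_bdd_ops[OF assms] op_net_conv_series_op[OF assms]
    by (intro op_net_conv_unique[of "psum \<sigma> \<xi>"] psum_bdd_ops[OF cocycle]) auto
qed

lemma Fourier_series_norm_convergent: "\<forall>\<xi>\<in>L. \<exists>T\<in>bdd_ops. op_net_conv (psum \<sigma> \<xi>) T"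
  using series_op_bdd_ops op_net_conv_series_op by blast

lemma vN_hat_in_eq_tpi_image: "{x \<in> vN \<sigma>. hat x \<in> L} = tpi \<sigma> ` L"
proof
  show "tpi \<sigma> ` L \<subseteq> {x \<in> vN \<sigma>. hat x \<in> L}"
    using tpi_eq_series_op hat_series_op[OF cocycle]
      op_net_conv_psum_in_vN[OF cocycle series_op_bdd_ops op_net_conv_series_op] by auto
  show "{x \<in> vN \<sigma>. hat x \<in> L} \<subseteq> tpi \<sigma> ` L"
  proof clarify
    fix x assume x: "x \<in> vN \<sigma>" and hx: "hat x \<in> L"
    have "x = series_op \<sigma> (hat x)"
      using op_net_conv_psum_in_vN[OF cocycle series_op_bdd_ops[OF hx] op_net_conv_series_op[OF hx]]
      by (intro vN_eqI_hat[OF cocycle x]) (simp_all add: hat_series_op[OF cocycle])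
    then show "x \<in> tpi \<sigma> ` L" using tpi_eq_series_op[OF hx] hx by (metis image_eqI)
  qed
qed

lemma tpi_image_subset_CF: "tpi \<sigma> ` L \<subseteq> CF \<sigma>"
proof clarify
  fix \<xi> assume x: "\<xi> \<in> L"
  have "series_op \<sigma> \<xi> \<in> Cr \<sigma>"
    by (rule op_net_conv_psum_in_Cr[OF cocycle series_op_bdd_ops[OF x] op_net_conv_series_op[OF x]])
  then show "tpi \<sigma> \<xi> \<in> CF \<sigma>"
    unfolding CF_def tpi_eq_series_op[OF x]
    using series_op_bdd_ops[OF x] op_net_conv_series_op[OF x] by (auto simp: hat_series_op[OF cocycle])
qed

end

section \<open>Weighted \<open>\<ell>\<^sup>2\<close>-spaces\<close>

lemma L2k_subset_ell2:
  assumes "\<forall>g. \<kappa> g \<ge> 1"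
  shows "L2k \<kappa> \<subseteq> ell2"
proof
  fix \<xi> assume x: "\<xi> \<in> L2k \<kappa>"
  have "cmod (\<xi> g) \<le> 1 * cmod (\<xi> g * complex_of_real (\<kappa> g))" for g
  proof -
    have "1 \<le> \<kappa> g" "\<bar>\<kappa> g\<bar> = \<kappa> g" using assms[rule_format, of g] by arith+
    then show ?thesis using mult_left_mono[of 1 "\<kappa> g" "cmod (\<xi> g)"] by (simp add: norm_mult)
  qed
  then show "\<xi> \<in> ell2"
    using ell2_l2norm_le_pointwise[of "\<lambda>g. \<xi> g * complex_of_real (\<kappa> g)" 1 \<xi>] x
    by (auto simp: L2k_def)
qed

lemma norm2k_nonneg: "norm2k \<kappa> \<xi> \<ge> 0"
  by (simp add: norm2k_def)

lemma norm2k_abs_fun: "norm2k \<kappa> (abs_fun f) = norm2k \<kappa> f"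
  unfolding norm2k_def by (rule conjunct2[OF ell2_cmod_cong]) (simp add: abs_fun_def norm_mult)

lemma L2k_tail_small:
  assumes "\<xi> \<in> L2k \<kappa>" "\<epsilon> > 0"
  shows "\<exists>F0. finite F0 \<and> (\<forall>F. finite F \<and> F \<inter> F0 = {} \<longrightarrow> norm2k \<kappa> (chiF F \<xi>) < \<epsilon>)"
proof -
  define \<eta> where "\<eta> = (\<lambda>g. \<xi> g * complex_of_real (\<kappa> g))"
  have e: "\<eta> \<in> ell2" using assms by (simp add: L2k_def \<eta>_def)
  obtain F0 where F0: "finite F0"
    "\<And>H. finite H \<Longrightarrow> H \<inter> F0 = {} \<Longrightarrow> (\<Sum>g\<in>H. (cmod (\<eta> g))^2) < (\<epsilon>/2)^2"
    using ell2_tail_small[OF e, of "(\<epsilon>/2)^2"] assms by auto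
  have "norm2k \<kappa> (chiF F \<xi>) < \<epsilon>" if F: "finite F" "F \<inter> F0 = {}" for F
  proof -
    have "chiF F \<eta> \<in> ell2 \<and> l2norm (chiF F \<eta>) \<le> \<epsilon>/2"
    proof (rule ell2_l2norm_leI)
      fix H :: "'a set" assume H: "finite H"
      have "(\<Sum>g\<in>H. (cmod (chiF F \<eta> g))^2) = (\<Sum>g\<in>H \<inter> F. (cmod (\<eta> g))^2)"
        using H by (intro sum.mono_neutral_cong_right) (auto simp: chiF_def)
      also have "\<dots> < (\<epsilon>/2)^2" using H F by (intro F0) auto
      finally show "(\<Sum>g\<in>H. (cmod (chiF F \<eta> g))^2) \<le> (\<epsilon>/2)^2" by simp
    qed (use assms in simp)
    moreover have "chiF F \<eta> = (\<lambda>g. chiF F \<xi> g * complex_of_real (\<kappa> g))"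
      by (simp add: chiF_def \<eta>_def fun_eq_iff)
    ultimately show ?thesis using assms(2) by (simp add: norm2k_def)
  qed
  then show ?thesis using F0(1) by blast
qed

theorem proposition3p7:
  fixes \<kappa> :: "'g::group_add \<Rightarrow> real"
  assumes "\<forall>g. \<kappa> g \<ge> 1"
  shows "(decay_prop triv (L2k \<kappa>) (norm2k \<kappa>) \<longleftrightarrow> pi_bounded triv (norm2k \<kappa>))
    \<and> (kappa_decaying (triv :: 'g \<Rightarrow> 'g \<Rightarrow> complex) \<kappa> \<longrightarrow>
        (\<forall>\<sigma>. cocycle \<sigma> \<longrightarrow>
            kappa_decaying \<sigma> \<kappa>
          \<and> (\<forall>\<xi>\<in>L2k \<kappa>. \<exists>T\<in>bdd_ops. op_net_conv (psum \<sigma> \<xi>) T)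
          \<and> {x \<in> vN \<sigma>. hat x \<in> L2k \<kappa>} = tpi \<sigma> ` L2k \<kappa>
          \<and> tpi \<sigma> ` L2k \<kappa> \<subseteq> CF \<sigma>))"
proof -
  have tails: "\<forall>\<xi>\<in>L2k \<kappa>. \<forall>\<epsilon>>0. \<exists>F0. finite F0 \<and>
      (\<forall>F. finite F \<and> F \<inter> F0 = {} \<longrightarrow> norm2k \<kappa> (chiF F \<xi>) < \<epsilon>)"
    using L2k_tail_small by blast
  have "kappa_decaying \<sigma> \<kappa>
      \<and> (\<forall>\<xi>\<in>L2k \<kappa>. \<exists>T\<in>bdd_ops. op_net_conv (psum \<sigma> \<xi>) T)
      \<and> {x \<in> vN \<sigma>. hat x \<in> L2k \<kappa>} = tpi \<sigma> ` L2k \<kappa>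
      \<and> tpi \<sigma> ` L2k \<kappa> \<subseteq> CF \<sigma>"
    if "kappa_decaying triv \<kappa>" "cocycle \<sigma>" for \<sigma>
  proof -
    have "pi_bounded \<sigma> (norm2k \<kappa>)"
      using that pi_bounded_twisted norm2k_abs_fun by (auto simp: kappa_decaying_def decay_prop_def)
    then interpret decay_property \<sigma> "L2k \<kappa>" "norm2k \<kappa>"
      using that(2) tails L2k_subset_ell2[OF assms] norm2k_nonneg
      by unfold_locales (auto simp: decay_prop_def)
    show ?thesis
      using decay Fourier_series_norm_convergent vN_hat_in_eq_tpi_image tpi_image_subset_CF
      by (simp add: kappa_decaying_def)
  qed
  then show ?thesis using tails by (auto simp: decay_prop_def)
qed

end
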